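(* For each nonnegative integer $k$, \[\sum_{n\geq 0}|\mathsf{Pop}^k(\mathcal{O}(\mathsf{C}_n))|\,x^n=\frac{1-x^{k+1}-\sqrt{(1-x^{k+1})^2-4x(1-x)(1-x^{k+1})}}{2x(1-x)}.\]
   Context: $\mathsf{C}_n$ is the chain with $n$ elements, viewed as a rooted tree (a path) whose root is the top element; for $n=0$ the lattice $\mathcal{O}(\mathsf{C}_0)$ has exactly one element. For a rooted tree $\mathsf{T}$ (poset with the root as maximum, each non-root node covered by its parent), an ornament is a nonempty set of nodes inducing a connected subgraph, and an ornamentation is a map $\delta$ from nodes to ornaments such that the maximal element of $\delta(v)$ is $v$ and any two sets $\delta(v),\delta(v')$ are nested or disjoint. $\mathcal{O}(\mathsf{T})$ is the set of ornamentations ordered by $\delta\leq\delta'$ iff $\delta(v)\subseteq\delta'(v)$ for all $v$; it is a lattice with meet given by pointwise intersection. (For $\mathsf{T}=\mathsf{C}_n$ this is the $n$-th Tamari lattice.) The pop-stack operator is $\mathsf{Pop}(\delta)=\bigwedge(\{\delta\}\cup\{\delta':\delta'\lessdot\delta\})$, and $\mathsf{Pop}^k$ is its $k$-th iterate ($\mathsf{Pop}^0$ the identity). *)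

theory Defs
  imports Complex_Main
begin

text \<open>A rooted tree is given as a finite set of nodes V with a partial order le
  (root = maximum, each non-root node covered by its parent).  Edges of the
  underlying graph are the cover relations.\<close>

definition tcovers :: "'a set \<Rightarrow> ('a \<Rightarrow> 'a \<Rightarrow> bool) \<Rightarrow> 'a \<Rightarrow> 'a \<Rightarrow> bool" where
  "tcovers V le x y \<longleftrightarrow> x \<in> V \<and> y \<in> V \<and> le x y \<and> x \<noteq> y \<and>
     \<not> (\<exists>z\<in>V. le x z \<and> le z y \<and> z \<noteq> x \<and> z \<noteq> y)"

definition induced_connected :: "'a set \<Rightarrow> ('a \<Rightarrow> 'a \<Rightarrow> bool) \<Rightarrow> 'a set \<Rightarrow> bool" where
  "induced_connected V le S \<longleftrightarrow>
     (\<forall>u\<in>S. \<forall>w\<in>S. (\<lambda>a b. a \<in> S \<and> b \<in> S \<and> (tcovers V le a b \<or> tcovers V le b a))\<^sup>*\<^sup>* u w)"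

definition ornament :: "'a set \<Rightarrow> ('a \<Rightarrow> 'a \<Rightarrow> bool) \<Rightarrow> 'a set \<Rightarrow> bool" where
  "ornament V le S \<longleftrightarrow> S \<noteq> {} \<and> S \<subseteq> V \<and> induced_connected V le S"

text \<open>Ornamentations are maps from nodes to ornaments; outside V they are fixed to be empty
  (so that they are determined by their values on V).\<close>
definition ornamentation :: "'a set \<Rightarrow> ('a \<Rightarrow> 'a \<Rightarrow> bool) \<Rightarrow> ('a \<Rightarrow> 'a set) \<Rightarrow> bool" where
  "ornamentation V le \<delta> \<longleftrightarrow>
     (\<forall>v\<in>V. ornament V le (\<delta> v) \<and> v \<in> \<delta> v \<and> (\<forall>u\<in>\<delta> v. le u v)) \<and>
     (\<forall>v\<in>V. \<forall>v'\<in>V. \<delta> v \<subseteq> \<delta> v' \<or> \<delta> v' \<subseteq> \<delta> v \<or> \<delta> v \<inter> \<delta> v' = {}) \<and>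
     (\<forall>v. v \<notin> V \<longrightarrow> \<delta> v = {})"

definition Orn :: "'a set \<Rightarrow> ('a \<Rightarrow> 'a \<Rightarrow> bool) \<Rightarrow> ('a \<Rightarrow> 'a set) set" where
  "Orn V le = {\<delta>. ornamentation V le \<delta>}"

text \<open>The order on O(T) is the pointwise inclusion order on functions.
  Lower covers of \<delta> in O(T):\<close>
definition lower_covers :: "'a set \<Rightarrow> ('a \<Rightarrow> 'a \<Rightarrow> bool) \<Rightarrow> ('a \<Rightarrow> 'a set) \<Rightarrow> ('a \<Rightarrow> 'a set) set" where
  "lower_covers V le \<delta> = {\<delta>'. \<delta>' \<in> Orn V le \<and> \<delta>' < \<delta> \<and>
      \<not> (\<exists>\<delta>''\<in>Orn V le. \<delta>' < \<delta>'' \<and> \<delta>'' < \<delta>)}"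

text \<open>Pop-stack operator; the meet in O(T) is pointwise intersection, i.e. Inf of functions.\<close>
definition Pop :: "'a set \<Rightarrow> ('a \<Rightarrow> 'a \<Rightarrow> bool) \<Rightarrow> ('a \<Rightarrow> 'a set) \<Rightarrow> ('a \<Rightarrow> 'a set)" where
  "Pop V le \<delta> = Inf ({\<delta>} \<union> lower_covers V le \<delta>)"

definition chain_nodes :: "nat \<Rightarrow> nat set" where
  "chain_nodes n = {1..n}"

definition pop_image_card :: "nat \<Rightarrow> nat \<Rightarrow> nat" where
  "pop_image_card k n =
     card ((Pop (chain_nodes n) (\<le>) ^^ k) ` Orn (chain_nodes n) (\<le>))"

end

theory Submission
  imports Defs "HOL-Library.FuncSet" "HOL-Analysis.FPS_Convergence"
begin

text \<open>An ornamentation \<delta> of the chain C_n is determined by the least elements a v of its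
  intervals \<delta> v = {a v..v}; the resulting vectors are nested, and the order of O(C_n) is the
  reverse pointwise order on them. A lower cover raises a single entry a v to the smallest value
  that keeps the vector nested, so Pop raises all entries at once. After one step the vector is a
  noncrossing matching on the nodes 2, ..., n (an arc from b v to v whenever b v < v), and every
  further step shortens each arc by one node. Hence for k \<ge> 1 the image of Pop^k is in bijection
  with the matchings all of whose arcs have length at least k, while for k = 0 it has Catalan
  many elements. Decomposing at the last node gives recurrences that make the generating
  function F a root of x(1 - x)F^2 - (1 - x^(k+1))F + (1 - x^(k+1)). The coefficients are bounded
  by the Catalan numbers, so F converges with |F x| \<le> 2 for |x| \<le> 1/4; for small x this bound
  singles out the root with the minus sign.\<close>

section \<open>Ornamentations of a chain as bracket vectors\<close>

text \<open>For the intervals {a v..v}, nested a says that any two of them are nested or disjoint.\<close>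

definition nested :: "(nat \<Rightarrow> nat) \<Rightarrow> bool" where
  "nested a \<longleftrightarrow> (\<forall>u v. a v \<le> u \<longrightarrow> u < v \<longrightarrow> a v \<le> a u)"

lemma nested_restrict:
  assumes "nested a"
  shows "nested (\<lambda>u. if P u then a u else u)"
  unfolding nested_def
proof (intro allI impI)
  fix u v assume uv: "(if P v then a v else v) \<le> u" "u < v"
  then have "P v" by (cases "P v") auto
  then show "(if P v then a v else v) \<le> (if P u then a u else u)"
    using assms uv unfolding nested_def by auto
qed

text \<open>The vector a records the least elements of the intervals {a v..v} of an ornamentation
  on the nodes lo, ..., lo + m - 1; it is the identity elsewhere.\<close>

definition bracket_vectors :: "nat \<Rightarrow> nat \<Rightarrow> (nat \<Rightarrow> nat) set" where
  "bracket_vectors lo m = {a. (\<forall>v. a v \<le> v) \<and> (\<forall>v. v < lo \<or> lo + m \<le> v \<longrightarrow> a v = v) \<and>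
     (\<forall>v. lo \<le> v \<longrightarrow> lo \<le> a v) \<and> nested a}"

lemma bracket_vectorsI:
  assumes "\<And>v. a v \<le> v" "\<And>v. v < lo \<or> lo + m \<le> v \<Longrightarrow> a v = v" "\<And>v. lo \<le> v \<Longrightarrow> lo \<le> a v"
    and "\<And>u v. a v \<le> u \<Longrightarrow> u < v \<Longrightarrow> a v \<le> a u"
  shows "a \<in> bracket_vectors lo m"
  using assms by (auto simp: bracket_vectors_def nested_def)

lemma bracket_vectorsD:
  assumes "a \<in> bracket_vectors lo m"
  shows bracket_vector_le: "a v \<le> v"
    and bracket_vector_fixed: "v < lo \<or> lo + m \<le> v \<Longrightarrow> a v = v"
    and bracket_vector_lower: "lo \<le> v \<Longrightarrow> lo \<le> a v"
    and bracket_vector_nested: "a v \<le> u \<Longrightarrow> u < v \<Longrightarrow> a v \<le> a u"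
  using assms by (auto simp: bracket_vectors_def nested_def)

lemma bracket_vector_idem:
  assumes "a \<in> bracket_vectors lo m"
  shows "a (a v) = a v"
  using bracket_vector_nested[OF assms, of v "a v"] bracket_vector_le[OF assms, of "a v"]
    bracket_vector_le[OF assms, of v]
  by (cases "a v < v") auto

lemma finite_fixed_outside:
  "finite {b :: nat \<Rightarrow> nat. (\<forall>v. v < lo \<or> hi \<le> v \<longrightarrow> b v = v) \<and> (\<forall>v. b v \<le> v)}"
proof (rule finite_subset)
  let ?I = "{lo..<hi}"
  show "{b :: nat \<Rightarrow> nat. (\<forall>v. v < lo \<or> hi \<le> v \<longrightarrow> b v = v) \<and> (\<forall>v. b v \<le> v)}
      \<subseteq> (\<lambda>f v. if v \<in> ?I then f v else v) ` (?I \<rightarrow>\<^sub>E {..hi})"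
  proof
    fix b :: "nat \<Rightarrow> nat"
    assume "b \<in> {b. (\<forall>v. v < lo \<or> hi \<le> v \<longrightarrow> b v = v) \<and> (\<forall>v. b v \<le> v)}"
    then have "b = (\<lambda>v. if v \<in> ?I then restrict b ?I v else v)" "restrict b ?I \<in> ?I \<rightarrow>\<^sub>E {..hi}"
      by (force simp: not_le, auto intro: le_trans[of _ _ hi])
    then show "b \<in> (\<lambda>f v. if v \<in> ?I then f v else v) ` (?I \<rightarrow>\<^sub>E {..hi})" by blast
  qed
qed (intro finite_imageI finite_PiE; simp)

lemma finite_bracket_vectors: "finite (bracket_vectors lo m)"
  by (rule finite_subset[OF _ finite_fixed_outside[of lo "lo + m"]])
    (use bracket_vector_le bracket_vector_fixed in blast)

lemma tcovers_chain: "tcovers {1..n} (\<le>) x y \<longleftrightarrow> 1 \<le> x \<and> y \<le> n \<and> y = Suc (x::nat)"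
proof
  assume H: "tcovers {1..n} (\<le>) x y"
  then have "x \<in> {1..n}" "y \<in> {1..n}" "x < y" unfolding tcovers_def by auto
  moreover have "y = Suc x"
  proof (rule ccontr)
    assume "y \<noteq> Suc x"
    then have "Suc x \<in> {1..n}" "x \<le> Suc x" "Suc x \<le> y" "Suc x \<noteq> x" "Suc x \<noteq> y"
      using \<open>x < y\<close> \<open>y \<in> {1..n}\<close> by auto
    then show False using H unfolding tcovers_def by blast
  qed
  ultimately show "1 \<le> x \<and> y \<le> n \<and> y = Suc x" by auto
qed (auto simp: tcovers_def)

lemma chain_connected_convex:
  assumes "induced_connected {1..n} (\<le>) S" "x \<in> S" "y \<in> S" "x \<le> z" "z \<le> (y::nat)"
  shows "z \<in> S"
proof (rule ccontr)
  assume "z \<notin> S"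
  let ?R = "\<lambda>a b. a \<in> S \<and> b \<in> S \<and> (tcovers {1..n} (\<le>) a b \<or> tcovers {1..n} (\<le>) b a)"
  have "w < z" if "?R\<^sup>*\<^sup>* x w" for w
    using that
  proof (induction rule: rtranclp_induct)
    case base
    then show ?case using assms(2,4) \<open>z \<notin> S\<close> by (metis le_neq_implies_less)
  next
    case (step w w')
    then have "w' = Suc w \<or> w = Suc w'" "w' \<noteq> z"
      using \<open>z \<notin> S\<close> tcovers_chain[of n w w'] tcovers_chain[of n w' w] by auto
    then show ?case using step.IH by auto
  qed
  moreover have "?R\<^sup>*\<^sup>* x y" using assms(1-3) unfolding induced_connected_def by blast
  ultimately show False using assms(5) by fastforce
qed

lemma chain_interval_connected:
  fixes c v n :: nat
  assumes "1 \<le> c" "v \<le> n"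
  shows "induced_connected {1..n} (\<le>) {c..v}"
proof -
  let ?R = "\<lambda>a b. a \<in> {c..v} \<and> b \<in> {c..v} \<and> (tcovers {1..n} (\<le>) a b \<or> tcovers {1..n} (\<le>) b a)"
  have to_c: "?R\<^sup>*\<^sup>* c u \<and> ?R\<^sup>*\<^sup>* u c" if "u \<in> {c..v}" for u
    using that
  proof (induction u)
    case (Suc u)
    show ?case
    proof (cases "Suc u = c")
      case False
      then have "?R\<^sup>*\<^sup>* c u" "?R\<^sup>*\<^sup>* u c" "?R u (Suc u)" "?R (Suc u) u"
        using Suc assms tcovers_chain[of n u "Suc u"] by auto
      then show ?thesis
        using rtranclp.rtrancl_into_rtrancl[of ?R c u "Suc u"]
          converse_rtranclp_into_rtranclp[of ?R "Suc u" u c] by blast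
    qed simp
  qed simp
  show ?thesis
    unfolding induced_connected_def
  proof (intro ballI)
    fix u w assume "u \<in> {c..v}" "w \<in> {c..v}"
    then have "?R\<^sup>*\<^sup>* u c" "?R\<^sup>*\<^sup>* c w" using to_c by blast+
    then show "?R\<^sup>*\<^sup>* u w" by (rule rtranclp_trans)
  qed
qed

definition orn_of_bracket :: "nat \<Rightarrow> (nat \<Rightarrow> nat) \<Rightarrow> nat \<Rightarrow> nat set" where
  "orn_of_bracket n a v = (if v \<in> {1..n} then {a v..v} else {})"

lemma orn_of_bracket_in_Orn:
  assumes a: "a \<in> bracket_vectors 1 n"
  shows "orn_of_bracket n a \<in> Orn (chain_nodes n) (\<le>)"
proof -
  let ?\<delta> = "orn_of_bracket n a"
  have laminar: "{a v..v} \<subseteq> {a v'..v'} \<or> {a v..v} \<inter> {a v'..v'} = {}" if "v < v'" for v v'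
    using bracket_vector_nested[OF a, of v' v] that by (cases "a v' \<le> v") auto
  have "ornament {1..n} (\<le>) (?\<delta> v) \<and> v \<in> ?\<delta> v \<and> (\<forall>u\<in>?\<delta> v. u \<le> v)"
    if "v \<in> {1..n}" for v
    using that bracket_vector_le[OF a, of v] bracket_vector_lower[OF a, of v]
      chain_interval_connected[of "a v" v n]
    by (auto simp: ornament_def orn_of_bracket_def)
  moreover have "?\<delta> v \<subseteq> ?\<delta> v' \<or> ?\<delta> v' \<subseteq> ?\<delta> v \<or> ?\<delta> v \<inter> ?\<delta> v' = {}"
    if "v \<in> {1..n}" "v' \<in> {1..n}" for v v'
    using that laminar[of v v'] laminar[of v' v]
    by (cases v v' rule: linorder_cases) (auto simp: orn_of_bracket_def)
  moreover have "?\<delta> v = {}" if "v \<notin> {1..n}" for v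
    using that by (auto simp: orn_of_bracket_def)
  ultimately show ?thesis
    unfolding Orn_def ornamentation_def chain_nodes_def mem_Collect_eq by blast
qed

lemma chain_ornament_eq_interval:
  fixes n v :: nat
  assumes "ornament {1..n} (\<le>) S" "v \<in> S" "\<forall>u\<in>S. u \<le> v"
  shows "S = {Min S..v}"
proof -
  have sub: "S \<subseteq> {1..n}" and conn: "induced_connected {1..n} (\<le>) S"
    using assms(1) by (auto simp: ornament_def)
  have fin: "finite S" using sub by (rule finite_subset) simp
  have mn: "Min S \<in> S" using Min_in[OF fin] assms(2) by blast
  show ?thesis
  proof
    show "S \<subseteq> {Min S..v}" using assms(3) fin by auto
    show "{Min S..v} \<subseteq> S" using chain_connected_convex[OF conn mn assms(2)] by auto
  qed
qed

lemma bracket_vector_of_laminar_intervals: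
  assumes range: "\<And>v. v \<in> {1..n} \<Longrightarrow> 1 \<le> a v \<and> a v \<le> v" and outside: "\<And>v. v \<notin> {1..n} \<Longrightarrow> a v = v"
    and laminar: "\<And>v v'. v \<in> {1..n} \<Longrightarrow> v' \<in> {1..n} \<Longrightarrow>
      {a v..v} \<subseteq> {a v'..v'} \<or> {a v'..v'} \<subseteq> {a v..v} \<or> {a v..v} \<inter> {a v'..v'} = {}"
  shows "a \<in> bracket_vectors 1 n"
proof (rule bracket_vectorsI)
  show "a v \<le> v" for v using range[of v] outside[of v] by (cases "v \<in> {1..n}") auto
  show "1 \<le> v \<Longrightarrow> 1 \<le> a v" for v using range[of v] outside[of v] by (cases "v \<le> n") auto
  show "v < 1 \<or> 1 + n \<le> v \<Longrightarrow> a v = v" for v using outside[of v] by auto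
  fix u v assume u: "a v \<le> u" "u < v"
  show "a v \<le> a u"
  proof (cases "v \<in> {1..n}")
    case True
    then have u_in: "u \<in> {1..n}" using u range[of v] by simp
    have "u \<in> {a v..v} \<inter> {a u..u}" using u range[OF u_in] by simp
    then consider "{a u..u} \<subseteq> {a v..v}" | "{a v..v} \<subseteq> {a u..u}"
      using laminar[OF True u_in] by blast
    then show ?thesis
      using range[OF True] range[OF u_in] u by cases auto
  qed (use u outside in simp)
qed

lemma Orn_chainE:
  assumes "\<delta> \<in> Orn (chain_nodes n) (\<le>)"
  obtains a where "a \<in> bracket_vectors 1 n" "\<delta> = orn_of_bracket n a"
proof -
  have orn: "\<And>v. v \<in> {1..n} \<Longrightarrow> ornament {1..n} (\<le>) (\<delta> v) \<and> v \<in> \<delta> v \<and> (\<forall>u\<in>\<delta> v. u \<le> v)"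
    and laminar: "\<And>v v'. v \<in> {1..n} \<Longrightarrow> v' \<in> {1..n} \<Longrightarrow>
        \<delta> v \<subseteq> \<delta> v' \<or> \<delta> v' \<subseteq> \<delta> v \<or> \<delta> v \<inter> \<delta> v' = {}"
    and outside: "\<And>v. v \<notin> {1..n} \<Longrightarrow> \<delta> v = {}"
    using assms unfolding Orn_def chain_nodes_def ornamentation_def by blast+
  define a where "a v = (if v \<in> {1..n} then Min (\<delta> v) else v)" for v
  have interval: "\<delta> v = {a v..v}" if v: "v \<in> {1..n}" for v
    using chain_ornament_eq_interval[of n "\<delta> v" v] orn[OF v] v by (simp add: a_def)
  have range: "1 \<le> a v \<and> a v \<le> v" if v: "v \<in> {1..n}" for v
    using orn[OF v] unfolding interval[OF v] by (auto simp: ornament_def)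
  have "a \<in> bracket_vectors 1 n"
  proof (rule bracket_vector_of_laminar_intervals)
    show "1 \<le> a v \<and> a v \<le> v" if "v \<in> {1..n}" for v using range[OF that] .
    show "a v = v" if "v \<notin> {1..n}" for v using that by (auto simp: a_def)
    show "{a v..v} \<subseteq> {a v'..v'} \<or> {a v'..v'} \<subseteq> {a v..v} \<or> {a v..v} \<inter> {a v'..v'} = {}"
      if "v \<in> {1..n}" "v' \<in> {1..n}" for v v'
      using laminar[OF that] unfolding interval[OF that(1)] interval[OF that(2)] .
  qed
  moreover have "\<delta> = orn_of_bracket n a"
  proof
    fix v show "\<delta> v = orn_of_bracket n a v"
      using interval[of v] outside[of v] by (cases "v \<in> {1..n}") (simp_all add: orn_of_bracket_def)
  qed
  ultimately show ?thesis using that by blast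
qed

lemma Orn_chain: "Orn (chain_nodes n) (\<le>) = orn_of_bracket n ` bracket_vectors 1 n"
  using orn_of_bracket_in_Orn Orn_chainE by blast

lemma orn_of_bracket_le_iff:
  assumes "a \<in> bracket_vectors 1 n" "b \<in> bracket_vectors 1 n"
  shows "orn_of_bracket n a \<le> orn_of_bracket n b \<longleftrightarrow> b \<le> a"
proof
  assume le: "orn_of_bracket n a \<le> orn_of_bracket n b"
  show "b \<le> a"
  proof (rule le_funI)
    fix v show "b v \<le> a v"
      using le_funD[OF le, of v] bracket_vector_le[OF assms(1), of v]
        bracket_vector_fixed[OF assms(1), of v] bracket_vector_fixed[OF assms(2), of v]
      by (cases "v \<in> {1..n}") (auto simp: orn_of_bracket_def)
  qed
next
  assume "b \<le> a"
  then show "orn_of_bracket n a \<le> orn_of_bracket n b"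
    by (intro le_funI) (auto simp: orn_of_bracket_def le_fun_def)
qed

lemma orn_of_bracket_less_iff:
  assumes "a \<in> bracket_vectors 1 n" "b \<in> bracket_vectors 1 n"
  shows "orn_of_bracket n a < orn_of_bracket n b \<longleftrightarrow> b < a"
  using orn_of_bracket_le_iff[OF assms] orn_of_bracket_le_iff[OF assms(2,1)] by (simp add: less_le_not_le)

lemma inj_on_orn_of_bracket: "inj_on (orn_of_bracket n) (bracket_vectors 1 n)"
proof (rule inj_onI)
  fix a b assume a: "a \<in> bracket_vectors 1 n" and b: "b \<in> bracket_vectors 1 n"
    and eq: "orn_of_bracket n a = orn_of_bracket n b"
  have "b \<le> a" using orn_of_bracket_le_iff[OF a b] eq by simp
  moreover have "a \<le> b" using orn_of_bracket_le_iff[OF b a] eq by simp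
  ultimately show "a = b" by (rule order.antisym[rotated])
qed

section \<open>Pop on bracket vectors\<close>

text \<open>Raising a v to just above the last u < v with a u = a v is the smallest change of this
  single entry that keeps a nested; these changes are the lower covers.\<close>

definition pop_bracket :: "(nat \<Rightarrow> nat) \<Rightarrow> nat \<Rightarrow> nat" where
  "pop_bracket a v = (if a v < v then Suc (Max {u. u < v \<and> a u = a v}) else v)"

lemma pop_bracket_eq_self: "\<not> a v < v \<Longrightarrow> pop_bracket a v = v"
  by (simp add: pop_bracket_def)

lemma pop_bracket_ltE:
  assumes a: "a \<in> bracket_vectors lo m" and v: "a v < v"
  obtains p where "pop_bracket a v = Suc p" "p < v" "a p = a v" "a v \<le> p"
    "\<And>u. u < v \<Longrightarrow> a u = a v \<Longrightarrow> u \<le> p"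
proof -
  let ?S = "{u. u < v \<and> a u = a v}"
  have fin: "finite ?S" by (rule finite_subset[of _ "{..<v}"]) auto
  have "a v \<in> ?S" using v bracket_vector_idem[OF a] by simp
  then have max: "Max ?S \<in> ?S" using Max_in[OF fin] by blast
  show ?thesis
  proof (rule that)
    show "pop_bracket a v = Suc (Max ?S)" using v by (simp add: pop_bracket_def)
    show "Max ?S < v" "a (Max ?S) = a v" using max by simp_all
    show "a v \<le> Max ?S" using max bracket_vector_le[OF a, of "Max ?S"] by simp
    show "u \<le> Max ?S" if "u < v" "a u = a v" for u using Max_ge[OF fin] that by simp
  qed
qed

lemma pop_bracket_le:
  assumes "a \<in> bracket_vectors lo m"
  shows "pop_bracket a v \<le> v"
proof (cases "a v < v")
  case True
  then show ?thesis using pop_bracket_ltE[OF assms True] by (metis Suc_leI)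
qed (simp add: pop_bracket_eq_self)

lemma pop_bracket_ge:
  assumes "a \<in> bracket_vectors lo m"
  shows "a v \<le> pop_bracket a v"
proof (cases "a v < v")
  case True
  then show ?thesis using pop_bracket_ltE[OF assms True] by (metis le_SucI)
qed (simp add: pop_bracket_eq_self bracket_vector_le[OF assms])

lemma pop_bracket_in_bracket_vectors:
  assumes a: "a \<in> bracket_vectors lo m"
  shows "pop_bracket a \<in> bracket_vectors lo m"
proof (rule bracket_vectorsI)
  show "pop_bracket a v \<le> v" for v by (rule pop_bracket_le[OF a])
  show "v < lo \<or> lo + m \<le> v \<Longrightarrow> pop_bracket a v = v" for v
    using bracket_vector_fixed[OF a] by (simp add: pop_bracket_eq_self)
  show "lo \<le> v \<Longrightarrow> lo \<le> pop_bracket a v" for v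
    using pop_bracket_ge[OF a, of v] bracket_vector_lower[OF a, of v] by simp
  fix u v assume uv: "pop_bracket a v \<le> u" "u < v"
  then have "a v < v" using pop_bracket_eq_self[of a v] by fastforce
  then obtain p where p: "pop_bracket a v = Suc p" "a p = a v" "a v \<le> p"
      "\<And>u. u < v \<Longrightarrow> a u = a v \<Longrightarrow> u \<le> p"
    using pop_bracket_ltE[OF a] by metis
  have "a v \<le> a u" using bracket_vector_nested[OF a, of v u] p uv by simp
  moreover have "a u \<noteq> a v" using p(1) p(4)[of u] uv by auto
  ultimately have avu: "a v < a u" by simp
  show "pop_bracket a v \<le> pop_bracket a u"
  proof (cases "a u < u")
    case True
    then obtain q where q: "pop_bracket a u = Suc q" "a q = a u" "a u \<le> q"
      using pop_bracket_ltE[OF a] by metis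
    have "p \<le> q"
    proof (rule ccontr)
      assume "\<not> p \<le> q"
      then have "a u \<le> a p" using bracket_vector_nested[OF a, of u p] p(1) q(3) uv by simp
      then show False using avu p(2) by simp
    qed
    then show ?thesis using p(1) q(1) by simp
  qed (use uv pop_bracket_eq_self in simp)
qed

lemma bracket_update_pop_in_bracket_vectors:
  assumes a: "a \<in> bracket_vectors lo m" and w: "a w < w"
  shows "a(w := pop_bracket a w) \<in> bracket_vectors lo m"
proof -
  obtain p where p: "pop_bracket a w = Suc p" "p < w" "a p = a w" "a w \<le> p"
      "\<And>u. u < w \<Longrightarrow> a u = a w \<Longrightarrow> u \<le> p"
    using pop_bracket_ltE[OF a w] by metis
  have w_range: "\<not> (w < lo \<or> lo + m \<le> w)" using bracket_vector_fixed[OF a, of w] w by auto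
  show ?thesis
  proof (rule bracket_vectorsI)
    show "(a(w := pop_bracket a w)) v \<le> v" for v
      using bracket_vector_le[OF a] pop_bracket_le[OF a] by simp
    show "v < lo \<or> lo + m \<le> v \<Longrightarrow> (a(w := pop_bracket a w)) v = v" for v
      using bracket_vector_fixed[OF a] w_range by auto
    have "lo \<le> a w" using bracket_vector_lower[OF a, of w] w_range by simp
    then show "lo \<le> v \<Longrightarrow> lo \<le> (a(w := pop_bracket a w)) v" for v
      using bracket_vector_lower[OF a, of v] p(1,4) by simp
    fix u v assume uv: "(a(w := pop_bracket a w)) v \<le> u" "u < v"
    show "(a(w := pop_bracket a w)) v \<le> (a(w := pop_bracket a w)) u"
    proof (cases "v = w")
      case True
      then have u: "Suc p \<le> u" "u < w" using uv p(1) by auto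
      have "a w \<le> a u" using bracket_vector_nested[OF a, of w u] p(4) u by simp
      moreover have "a u \<noteq> a w" using p(5)[of u] u by auto
      ultimately have "a w < a u" by simp
      moreover have "a u \<le> p \<Longrightarrow> a u \<le> a p" using bracket_vector_nested[OF a, of u p] u by simp
      ultimately have "\<not> a u \<le> p" using p(3) by auto
      then have "Suc p \<le> a u" by simp
      then show ?thesis using True u p(1) by simp
    next
      case False
      then have "a v \<le> a u" using bracket_vector_nested[OF a, of v u] uv by simp
      then show ?thesis using False pop_bracket_ge[OF a, of u] by auto
    qed
  qed
qed

lemma pop_bracket_le_if_agree_below:
  assumes a: "a \<in> bracket_vectors lo m" and c: "c \<in> bracket_vectors lo m"
    and below: "\<And>v. v < w \<Longrightarrow> c v = a v" and w: "a w < c w"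
  shows "a w < w" "pop_bracket a w \<le> c w"
proof -
  show "a w < w" using w bracket_vector_le[OF c, of w] by simp
  then obtain p where p: "pop_bracket a w = Suc p" "p < w" "a p = a w"
    using pop_bracket_ltE[OF a] by metis
  have "\<not> c w \<le> p"
  proof
    assume "c w \<le> p"
    then have "c w \<le> c p" using bracket_vector_nested[OF c, of w p] p(2) by simp
    then show False using below[OF p(2)] p(3) w by simp
  qed
  then show "pop_bracket a w \<le> c w" using p(1) by simp
qed

lemma orn_of_bracket_update_in_lower_covers:
  assumes a: "a \<in> bracket_vectors 1 n" and w: "a w < w"
  shows "orn_of_bracket n (a(w := pop_bracket a w)) \<in> lower_covers (chain_nodes n) (\<le>) (orn_of_bracket n a)"
proof -
  let ?b = "a(w := pop_bracket a w)"
  have b: "?b \<in> bracket_vectors 1 n" by (rule bracket_update_pop_in_bracket_vectors[OF a w])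
  have "a \<le> ?b" using pop_bracket_ge[OF a] by (simp add: le_fun_def)
  moreover have "\<not> ?b \<le> a"
  proof
    assume "?b \<le> a"
    then have "pop_bracket a w \<le> a w" using le_funD[of ?b a w] by simp
    then show False using pop_bracket_ltE[OF a w] by (metis not_less_eq_eq)
  qed
  ultimately have "a < ?b" by (simp add: less_le_not_le)
  then have lt: "orn_of_bracket n ?b < orn_of_bracket n a" using orn_of_bracket_less_iff[OF b a] by simp
  have no_between: "\<not> (orn_of_bracket n ?b < \<delta> \<and> \<delta> < orn_of_bracket n a)"
    if \<delta>_Orn: "\<delta> \<in> Orn (chain_nodes n) (\<le>)" for \<delta>
  proof
    assume between: "orn_of_bracket n ?b < \<delta> \<and> \<delta> < orn_of_bracket n a"
    obtain c where c: "c \<in> bracket_vectors 1 n" and \<delta>: "\<delta> = orn_of_bracket n c"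
      using Orn_chainE[OF \<delta>_Orn] by blast
    have cb: "c < ?b" and ac: "a < c"
      using between orn_of_bracket_less_iff[OF b c] orn_of_bracket_less_iff[OF c a] \<delta> by auto
    have c_le: "c v \<le> ?b v" and le_c: "a v \<le> c v" for v
      using le_funD[OF less_imp_le[OF cb], of v] le_funD[OF less_imp_le[OF ac], of v] by simp_all
    have off_w: "c v = a v" if "v \<noteq> w" for v
      using c_le[of v] le_c[of v] that by simp
    have "c w \<noteq> a w"
    proof
      assume "c w = a w"
      then have "c = a" using off_w by (intro ext) metis
      then show False using ac by simp
    qed
    then have "a w < c w" using le_c[of w] by simp
    then have "pop_bracket a w \<le> c w" using pop_bracket_le_if_agree_below[OF a c] off_w by simp
    then have "c = ?b" using off_w c_le[of w] by (intro ext) simp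
    then show False using cb by simp
  qed
  show ?thesis
    unfolding lower_covers_def using orn_of_bracket_in_Orn[OF b] lt no_between by blast
qed

lemma lower_covers_orn_of_bracketE:
  assumes a: "a \<in> bracket_vectors 1 n"
    and \<delta>: "\<delta> \<in> lower_covers (chain_nodes n) (\<le>) (orn_of_bracket n a)"
  obtains w where "a w < w" "\<delta> = orn_of_bracket n (a(w := pop_bracket a w))"
proof -
  have \<delta>_Orn: "\<delta> \<in> Orn (chain_nodes n) (\<le>)" and lt: "\<delta> < orn_of_bracket n a"
    and no_between: "\<not> (\<exists>\<delta>'\<in>Orn (chain_nodes n) (\<le>). \<delta> < \<delta>' \<and> \<delta>' < orn_of_bracket n a)"
    using \<delta> unfolding lower_covers_def by auto
  obtain c where c: "c \<in> bracket_vectors 1 n" and \<delta>_c: "\<delta> = orn_of_bracket n c"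
    using Orn_chainE[OF \<delta>_Orn] by blast
  have ac: "a < c" using lt orn_of_bracket_less_iff[OF c a] \<delta>_c by simp
  then have "\<exists>v. a v < c v" by (metis le_funI less_le_not_le not_le)
  define w where "w = (LEAST v. a v < c v)"
  have w: "a w < c w" unfolding w_def using \<open>\<exists>v. a v < c v\<close> by (rule LeastI_ex)
  have below: "c v = a v" if "v < w" for v
    using not_less_Least[of v "\<lambda>v. a v < c v"] that le_funD[OF less_imp_le[OF ac], of v]
    unfolding w_def by simp
  note w_lt = pop_bracket_le_if_agree_below[OF a c below w]
  let ?b = "a(w := pop_bracket a w)"
  have b: "?b \<in> bracket_vectors 1 n" by (rule bracket_update_pop_in_bracket_vectors[OF a w_lt(1)])
  have b_cover: "orn_of_bracket n ?b \<in> lower_covers (chain_nodes n) (\<le>) (orn_of_bracket n a)"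
    by (rule orn_of_bracket_update_in_lower_covers[OF a w_lt(1)])
  have "?b \<le> c" using w_lt(2) le_funD[OF less_imp_le[OF ac]] by (simp add: le_fun_def)
  then have "\<delta> \<le> orn_of_bracket n ?b" using orn_of_bracket_le_iff[OF c b] \<delta>_c by simp
  moreover have "\<not> \<delta> < orn_of_bracket n ?b"
    using no_between b_cover orn_of_bracket_in_Orn[OF b] unfolding lower_covers_def by blast
  ultimately show ?thesis using that w_lt(1) by (simp add: less_le)
qed

lemma lower_covers_orn_of_bracket_contain:
  assumes a: "a \<in> bracket_vectors 1 n" and v: "v \<in> {1..n}"
    and \<delta>: "\<delta> \<in> lower_covers (chain_nodes n) (\<le>) (orn_of_bracket n a)"
  shows "{pop_bracket a v..v} \<subseteq> \<delta> v"
proof -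
  obtain w where "\<delta> = orn_of_bracket n (a(w := pop_bracket a w))"
    using lower_covers_orn_of_bracketE[OF a \<delta>] by blast
  then show ?thesis using v pop_bracket_ge[OF a, of v]
    by (cases "w = v") (auto simp: orn_of_bracket_def)
qed

lemma Pop_orn_of_bracket:
  assumes a: "a \<in> bracket_vectors 1 n"
  shows "Pop (chain_nodes n) (\<le>) (orn_of_bracket n a) = orn_of_bracket n (pop_bracket a)"
proof
  fix v
  let ?C = "lower_covers (chain_nodes n) (\<le>) (orn_of_bracket n a)"
  have Pop_v: "Pop (chain_nodes n) (\<le>) (orn_of_bracket n a) v
      = orn_of_bracket n a v \<inter> (\<Inter>\<delta>\<in>?C. \<delta> v)"
    by (simp add: Pop_def Inf_apply)
  show "Pop (chain_nodes n) (\<le>) (orn_of_bracket n a) v = orn_of_bracket n (pop_bracket a) v"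
  proof (cases "v \<in> {1..n}")
    case False
    then have "orn_of_bracket n a v = {}" "orn_of_bracket n (pop_bracket a) v = {}"
      by (auto simp: orn_of_bracket_def)
    then show ?thesis unfolding Pop_v by simp
  next
    case True
    note covers_contain = lower_covers_orn_of_bracket_contain[OF a True]
    have "orn_of_bracket n a v \<inter> (\<Inter>\<delta>\<in>?C. \<delta> v) = {pop_bracket a v..v}"
    proof (cases "a v < v")
      case True
      then have "orn_of_bracket n (a(v := pop_bracket a v)) \<in> ?C"
        by (rule orn_of_bracket_update_in_lower_covers[OF a])
      then have "(\<Inter>\<delta>\<in>?C. \<delta> v) \<subseteq> {pop_bracket a v..v}"
        using \<open>v \<in> {1..n}\<close> by (force simp: orn_of_bracket_def)
      then show ?thesis
        using covers_contain \<open>v \<in> {1..n}\<close> pop_bracket_ge[OF a, of v]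
        by (auto simp: orn_of_bracket_def)
    next
      case False
      then have "a v = v" "pop_bracket a v = v"
        using bracket_vector_le[OF a, of v] pop_bracket_eq_self[of a v] by simp_all
      then show ?thesis using covers_contain \<open>v \<in> {1..n}\<close> by (auto simp: orn_of_bracket_def)
    qed
    then show ?thesis unfolding Pop_v using True by (simp add: orn_of_bracket_def)
  qed
qed

lemma funpow_Pop_orn_of_bracket:
  assumes "a \<in> bracket_vectors 1 n"
  shows "(Pop (chain_nodes n) (\<le>) ^^ k) (orn_of_bracket n a) = orn_of_bracket n ((pop_bracket ^^ k) a)"
    and "(pop_bracket ^^ k) a \<in> bracket_vectors 1 n"
proof (induction k)
  case (Suc k)
  case 1 show ?case using Suc Pop_orn_of_bracket by simp
  case 2 show ?case using Suc pop_bracket_in_bracket_vectors by simp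
qed (use assms in simp_all)

lemma pop_image_card_eq_card_bracket_image:
  "pop_image_card k n = card ((pop_bracket ^^ k) ` bracket_vectors 1 n)"
proof -
  have "(Pop (chain_nodes n) (\<le>) ^^ k) ` Orn (chain_nodes n) (\<le>)
      = orn_of_bracket n ` (pop_bracket ^^ k) ` bracket_vectors 1 n"
    unfolding Orn_chain image_image using funpow_Pop_orn_of_bracket(1) by simp
  moreover have "inj_on (orn_of_bracket n) ((pop_bracket ^^ k) ` bracket_vectors 1 n)"
    using inj_on_orn_of_bracket by (rule inj_on_subset) (use funpow_Pop_orn_of_bracket(2) in auto)
  ultimately show ?thesis unfolding pop_image_card_def by (simp add: card_image)
qed

section \<open>The image of Pop^k: matchings with long arcs\<close>

text \<open>b v < v encodes an arc from b v to v; by the last condition the left end of an arc is a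
  fixed point of b and the left end of no other arc.\<close>

definition noncrossing_matching :: "(nat \<Rightarrow> nat) \<Rightarrow> bool" where
  "noncrossing_matching b \<longleftrightarrow> (\<forall>v. b v \<le> v) \<and> nested b \<and> (\<forall>u v. u < v \<longrightarrow> b u = b v \<longrightarrow> u = b v)"

lemma noncrossing_matchingI:
  assumes "\<And>v. b v \<le> v" "\<And>u v. b v \<le> u \<Longrightarrow> u < v \<Longrightarrow> b v \<le> b u"
    and "\<And>u v. u < v \<Longrightarrow> b u = b v \<Longrightarrow> u = b v"
  shows "noncrossing_matching b"
  using assms by (auto simp: noncrossing_matching_def nested_def)

lemma noncrossing_matchingD:
  assumes "noncrossing_matching b"
  shows matching_le: "b v \<le> v"
    and matching_nested: "b v \<le> u \<Longrightarrow> u < v \<Longrightarrow> b v \<le> b u"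
    and matching_left_end: "u < v \<Longrightarrow> b u = b v \<Longrightarrow> u = b v"
  using assms by (auto simp: noncrossing_matching_def nested_def)

lemma matching_idem:
  assumes "noncrossing_matching b"
  shows "b (b v) = b v"
  using matching_nested[OF assms, of v "b v"] matching_le[OF assms, of "b v"]
    matching_le[OF assms, of v]
  by (cases "b v < v") auto

lemma matching_restrict:
  assumes b: "noncrossing_matching b"
  shows "noncrossing_matching (\<lambda>v. if P v then b v else v)"
proof (rule noncrossing_matchingI)
  show "(if P v then b v else v) \<le> v" for v using matching_le[OF b] by simp
next
  fix u v assume uv: "(if P v then b v else v) \<le> u" "u < v"
  then have "P v" by (cases "P v") auto
  then show "(if P v then b v else v) \<le> (if P u then b u else u)"
    using matching_nested[OF b, of v u] uv by simp
next
  fix u v assume uv: "u < v" "(if P u then b u else u) = (if P v then b v else v)"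
  have "P v"
  proof (rule ccontr)
    assume "\<not> P v"
    then show False using uv matching_le[OF b, of u] by (cases "P u") auto
  qed
  then show "u = (if P v then b v else v)"
    using uv matching_left_end[OF b, of u v] by (cases "P u") auto
qed

lemma pop_bracket_noncrossing_matching:
  assumes a: "a \<in> bracket_vectors lo m"
  shows "noncrossing_matching (pop_bracket a)"
proof (rule noncrossing_matchingI)
  show "pop_bracket a v \<le> v" for v by (rule pop_bracket_le[OF a])
  show "pop_bracket a v \<le> u \<Longrightarrow> u < v \<Longrightarrow> pop_bracket a v \<le> pop_bracket a u" for u v
    by (rule bracket_vector_nested[OF pop_bracket_in_bracket_vectors[OF a]])
  fix u v assume uv: "u < v" "pop_bracket a u = pop_bracket a v"
  show "u = pop_bracket a v"
  proof (cases "a v < v \<and> a u < u")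
    case True
    obtain p where p: "pop_bracket a v = Suc p" "a p = a v" "\<And>u. u < v \<Longrightarrow> a u = a v \<Longrightarrow> u \<le> p"
      using pop_bracket_ltE[OF a, of v] True by metis
    obtain q where q: "pop_bracket a u = Suc q" "q < u" "a q = a u"
      using pop_bracket_ltE[OF a, of u] True by metis
    have "q = p" using p(1) q(1) uv(2) by simp
    then show ?thesis using p(2) p(3)[of u] q(2,3) uv(1) by simp
  next
    case False
    then show ?thesis
      using uv pop_bracket_eq_self[of a u] pop_bracket_eq_self[of a v] pop_bracket_le[OF a, of u]
      by auto
  qed
qed

lemma pop_bracket_of_matching:
  assumes b: "noncrossing_matching b"
  shows "pop_bracket b v = (if b v < v then Suc (b v) else v)"
proof (cases "b v < v")
  case True
  then have "{u. u < v \<and> b u = b v} = {b v}"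
    using matching_left_end[OF b, of _ v] matching_idem[OF b, of v] by auto
  then show ?thesis by (simp add: pop_bracket_def)
qed (simp add: pop_bracket_def)

definition shorten_arcs :: "nat \<Rightarrow> (nat \<Rightarrow> nat) \<Rightarrow> nat \<Rightarrow> nat" where
  "shorten_arcs j b v = (if b v + j < v then b v + j else v)"

lemma shorten_arcs_0:
  assumes "noncrossing_matching b"
  shows "shorten_arcs 0 b = b"
  using matching_le[OF assms] by (auto simp: shorten_arcs_def fun_eq_iff intro: le_antisym)

lemma shorten_arcs_matching:
  assumes b: "noncrossing_matching b"
  shows "noncrossing_matching (shorten_arcs j b)"
proof (rule noncrossing_matchingI)
  show "shorten_arcs j b v \<le> v" for v by (simp add: shorten_arcs_def)
next
  fix u v assume uv: "shorten_arcs j b v \<le> u" "u < v"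
  then have v: "shorten_arcs j b v = b v + j" by (auto simp: shorten_arcs_def split: if_splits)
  then have "b v \<le> b u" using matching_nested[OF b, of v u] uv by simp
  then show "shorten_arcs j b v \<le> shorten_arcs j b u" using uv v by (simp add: shorten_arcs_def)
next
  fix u v assume uv: "u < v" "shorten_arcs j b u = shorten_arcs j b v"
  then have v: "b v + j < v" by (auto simp: shorten_arcs_def split: if_splits)
  show "u = shorten_arcs j b v"
  proof (cases "b u + j < u")
    case True
    then have "b u = b v" using uv v by (simp add: shorten_arcs_def)
    then have "b u = u" using matching_left_end[OF b uv(1)] matching_idem[OF b, of v] by simp
    then show ?thesis using True by simp
  qed (use uv in \<open>simp add: shorten_arcs_def\<close>)
qed

lemma pop_bracket_shorten_arcs:
  assumes "noncrossing_matching b"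
  shows "pop_bracket (shorten_arcs j b) = shorten_arcs (Suc j) b"
  using pop_bracket_of_matching[OF shorten_arcs_matching[OF assms, of j]]
  by (auto simp: fun_eq_iff shorten_arcs_def)

lemma funpow_pop_bracket_matching:
  assumes "noncrossing_matching b"
  shows "(pop_bracket ^^ j) b = shorten_arcs j b"
  by (induction j) (simp_all add: shorten_arcs_0 pop_bracket_shorten_arcs assms)

definition long_matchings :: "nat \<Rightarrow> nat \<Rightarrow> nat \<Rightarrow> (nat \<Rightarrow> nat) set" where
  "long_matchings k lo m = {b. noncrossing_matching b \<and> (\<forall>v. v < lo \<or> lo + m \<le> v \<longrightarrow> b v = v) \<and>
     (\<forall>v. b v < v \<longrightarrow> lo \<le> b v \<and> k \<le> v - b v)}"

lemma long_matchingsI: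
  assumes "noncrossing_matching b" "\<And>v. v < lo \<or> lo + m \<le> v \<Longrightarrow> b v = v"
    and "\<And>v. b v < v \<Longrightarrow> lo \<le> b v" "\<And>v. b v < v \<Longrightarrow> k \<le> v - b v"
  shows "b \<in> long_matchings k lo m"
  using assms by (simp add: long_matchings_def)

lemma long_matchingsD:
  assumes "b \<in> long_matchings k lo m"
  shows long_matching_matching: "noncrossing_matching b"
    and long_matching_fixed: "v < lo \<or> lo + m \<le> v \<Longrightarrow> b v = v"
    and long_matching_lower: "b v < v \<Longrightarrow> lo \<le> b v"
    and long_matching_long: "b v < v \<Longrightarrow> k \<le> v - b v"
  using assms by (auto simp: long_matchings_def)

lemma finite_long_matchings: "finite (long_matchings k lo m)"
  by (rule finite_subset[OF _ finite_fixed_outside[of lo "lo + m"]])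
    (auto dest: long_matching_fixed intro: matching_le[OF long_matching_matching])

lemma pop_bracket_lt_range:
  assumes a: "a \<in> bracket_vectors lo m" and v: "pop_bracket a v < v"
  shows "lo < pop_bracket a v" "v < lo + m"
proof -
  have "a v < v" using v pop_bracket_eq_self[of a v] by auto
  then obtain p where "pop_bracket a v = Suc p" "a v \<le> p" using pop_bracket_ltE[OF a] by metis
  moreover have "\<not> (v < lo \<or> lo + m \<le> v)" using bracket_vector_fixed[OF a, of v] \<open>a v < v\<close> by auto
  ultimately show "lo < pop_bracket a v" "v < lo + m"
    using bracket_vector_lower[OF a, of v] by simp_all
qed

text \<open>After its first step Pop only shortens arcs, so exactly the arcs of length at least k
  survive k steps. No arc starts at lo, hence the matchings live on the nodes from Suc lo on.\<close>

lemma funpow_pop_bracket_in_shorten_image: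
  assumes k: "1 \<le> k" and a: "a \<in> bracket_vectors lo m"
  shows "(pop_bracket ^^ k) a \<in> shorten_arcs (k - 1) ` long_matchings k (Suc lo) (m - 1)"
proof -
  let ?p = "pop_bracket a"
  have p: "noncrossing_matching ?p" by (rule pop_bracket_noncrossing_matching[OF a])
  define b where "b v = (if k \<le> v - ?p v then ?p v else v)" for v
  have b_lt: "?p v < v" "b v = ?p v" "k \<le> v - ?p v" if "b v < v" for v
    using that k by (auto simp: b_def split: if_splits)
  have "b \<in> long_matchings k (Suc lo) (m - 1)"
  proof (rule long_matchingsI)
    show "noncrossing_matching b" unfolding b_def by (rule matching_restrict[OF p])
    show "b v = v" if "v < Suc lo \<or> Suc lo + (m - 1) \<le> v" for v
    proof (rule ccontr)
      assume "b v \<noteq> v"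
      then have "b v < v" using matching_le[OF p, of v] by (simp add: b_def split: if_splits)
      then show False using that b_lt pop_bracket_lt_range[OF a] by fastforce
    qed
    show "b v < v \<Longrightarrow> Suc lo \<le> b v" for v using b_lt pop_bracket_lt_range[OF a] by fastforce
    show "b v < v \<Longrightarrow> k \<le> v - b v" for v using b_lt by simp
  qed
  moreover have "(pop_bracket ^^ k) a = shorten_arcs (k - 1) b"
  proof -
    have "(pop_bracket ^^ k) a = (pop_bracket ^^ (k - 1)) ?p"
      using k by (metis Suc_diff_le diff_Suc_1 funpow_Suc_right o_apply)
    also have "\<dots> = shorten_arcs (k - 1) ?p" by (rule funpow_pop_bracket_matching[OF p])
    also have "\<dots> = shorten_arcs (k - 1) b"
      using k by (auto simp: fun_eq_iff shorten_arcs_def b_def)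
    finally show ?thesis .
  qed
  ultimately show ?thesis by blast
qed

text \<open>Arcs that follow each other without a gap are merged into one interval, from which
  pop_bracket splits off the last arc again.\<close>

function pop_preimage :: "(nat \<Rightarrow> nat) \<Rightarrow> nat \<Rightarrow> nat" where
  "pop_preimage b v = (if b v < v then pop_preimage b (b v - 1) else v)"
  by auto
termination by (relation "measure snd") auto

declare pop_preimage.simps[simp del]

lemma pop_preimage_fixed: "\<not> b v < v \<Longrightarrow> pop_preimage b v = v"
  by (simp add: pop_preimage.simps)

lemma pop_preimage_step: "b v < v \<Longrightarrow> pop_preimage b v = pop_preimage b (b v - 1)"
  by (simp add: pop_preimage.simps)

lemma pop_preimage_le: "pop_preimage b v \<le> v"
proof (induction v rule: less_induct)
  case (less v)
  show ?case
  proof (cases "b v < v")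
    case True
    then have "b v - 1 < v" by simp
    then show ?thesis using less[of "b v - 1"] pop_preimage_step[of b v] True by simp
  qed (simp add: pop_preimage_fixed)
qed

lemma pop_preimage_ge:
  assumes b: "noncrossing_matching b" and v: "b v < v"
  shows "b v \<le> w \<Longrightarrow> w < v \<Longrightarrow> b v \<le> pop_preimage b w"
proof (induction w rule: less_induct)
  case (less w)
  show ?case
  proof (cases "b w < w")
    case True
    have "b w \<noteq> b v"
      using matching_left_end[OF b, of w v] matching_idem[OF b, of v] less.prems True by auto
    then have "b v < b w" using matching_nested[OF b, of v w] less.prems by simp
    then show ?thesis using less.IH[of "b w - 1"] less.prems True pop_preimage_step[of b w] by simp
  qed (use less.prems pop_preimage_fixed in simp)
qed

lemma pop_preimage_nested:
  assumes b: "noncrossing_matching b"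
  shows "nested (pop_preimage b)"
  unfolding nested_def
proof (intro allI impI)
  fix u v assume "pop_preimage b v \<le> u" "u < v"
  then show "pop_preimage b v \<le> pop_preimage b u"
  proof (induction v arbitrary: u rule: less_induct)
    case (less v)
    show ?case
    proof (cases "b v < v")
      case True
      then have step: "pop_preimage b v = pop_preimage b (b v - 1)" by (rule pop_preimage_step)
      consider "b v \<le> u" | "u = b v - 1" | "u < b v - 1" by linarith
      then show ?thesis
      proof cases
        case 1
        then show ?thesis
          using pop_preimage_ge[OF b True 1 less.prems(2)] pop_preimage_le[of b "b v - 1"] step
          by simp
      next
        case 3
        then show ?thesis using less.IH[of "b v - 1" u] less.prems step True by simp
      qed (use step in simp)
    qed (use less.prems pop_preimage_fixed in simp)
  qed
qed

lemma pop_preimage_in_bracket_vectors: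
  assumes b: "b \<in> long_matchings k (Suc lo) (m - 1)"
  shows "pop_preimage b \<in> bracket_vectors lo m"
proof (rule bracket_vectorsI)
  show "pop_preimage b v \<le> v" for v by (rule pop_preimage_le)
  show "pop_preimage b v = v" if "v < lo \<or> lo + m \<le> v" for v
  proof -
    have "v < Suc lo \<or> Suc lo + (m - 1) \<le> v" using that by auto
    then show ?thesis using long_matching_fixed[OF b, of v] pop_preimage_fixed[of b v] by simp
  qed
  show "lo \<le> v \<Longrightarrow> lo \<le> pop_preimage b v" for v
  proof (induction v rule: less_induct)
    case (less v)
    show ?case
    proof (cases "b v < v")
      case True
      then show ?thesis
        using less.IH[of "b v - 1"] long_matching_lower[OF b True] pop_preimage_step[of b v] by simp
    qed (use less.prems pop_preimage_fixed in simp)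
  qed
  show "pop_preimage b v \<le> u \<Longrightarrow> u < v \<Longrightarrow> pop_preimage b v \<le> pop_preimage b u" for u v
    using pop_preimage_nested[OF long_matching_matching[OF b]] by (simp add: nested_def)
qed

lemma pop_bracket_pop_preimage:
  assumes b: "b \<in> long_matchings k (Suc lo) m"
  shows "pop_bracket (pop_preimage b) = b"
proof
  fix v
  have nc: "noncrossing_matching b" by (rule long_matching_matching[OF b])
  show "pop_bracket (pop_preimage b) v = b v"
  proof (cases "b v < v")
    case True
    have pos: "0 < b v" using long_matching_lower[OF b True] by simp
    have step: "pop_preimage b v = pop_preimage b (b v - 1)" by (rule pop_preimage_step[of b v, OF True])
    have lt: "pop_preimage b v < v"
      using step pop_preimage_le[of b "b v - 1"] True by simp
    have "u \<le> b v - 1" if "u < v" "pop_preimage b u = pop_preimage b v" for u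
    proof (rule ccontr)
      assume "\<not> u \<le> b v - 1"
      then have "b v \<le> pop_preimage b u" using pop_preimage_ge[OF nc True, of u] that(1) by simp
      then show False using that(2) step pop_preimage_le[of b "b v - 1"] pos by simp
    qed
    then have "Max {u. u < v \<and> pop_preimage b u = pop_preimage b v} = b v - 1"
      using step True by (intro Max_eqI) auto
    then show ?thesis using lt pos by (simp add: pop_bracket_def)
  next
    case False
    then have "b v = v" "pop_preimage b v = v"
      using matching_le[OF nc, of v] pop_preimage_fixed[of b v] by simp_all
    then show ?thesis by (simp add: pop_bracket_eq_self)
  qed
qed

lemma shorten_image_in_funpow_pop_bracket_image:
  assumes k: "1 \<le> k" and b: "b \<in> long_matchings k (Suc lo) (m - 1)"
  shows "shorten_arcs (k - 1) b \<in> (pop_bracket ^^ k) ` bracket_vectors lo m"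
proof -
  have "(pop_bracket ^^ k) (pop_preimage b) = (pop_bracket ^^ (k - 1)) (pop_bracket (pop_preimage b))"
    using k by (metis Suc_diff_le diff_Suc_1 funpow_Suc_right o_apply)
  also have "\<dots> = shorten_arcs (k - 1) b"
    using pop_bracket_pop_preimage[OF b] funpow_pop_bracket_matching[OF long_matching_matching[OF b]]
    by simp
  finally show ?thesis using pop_preimage_in_bracket_vectors[OF b] by (metis image_eqI)
qed

lemma inj_on_shorten_arcs:
  assumes "1 \<le> k"
  shows "inj_on (shorten_arcs (k - 1)) (long_matchings k lo m)"
proof (rule inj_onI)
  have recover: "b v = (if shorten_arcs (k - 1) b v < v then shorten_arcs (k - 1) b v - (k - 1) else v)"
    if b: "b \<in> long_matchings k lo m" for b v
    using long_matching_long[OF b, of v] matching_le[OF long_matching_matching[OF b], of v] assms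
    by (cases "b v < v") (auto simp: shorten_arcs_def)
  fix b c assume "b \<in> long_matchings k lo m" "c \<in> long_matchings k lo m"
    and "shorten_arcs (k - 1) b = shorten_arcs (k - 1) c"
  then show "b = c" using recover by (metis ext)
qed

lemma card_funpow_pop_bracket_image:
  assumes "1 \<le> k"
  shows "card ((pop_bracket ^^ k) ` bracket_vectors lo m) = card (long_matchings k (Suc lo) (m - 1))"
proof -
  have "(pop_bracket ^^ k) ` bracket_vectors lo m = shorten_arcs (k - 1) ` long_matchings k (Suc lo) (m - 1)"
    using funpow_pop_bracket_in_shorten_image[OF assms] shorten_image_in_funpow_pop_bracket_image[OF assms]
    by blast
  then show ?thesis using card_image[OF inj_on_shorten_arcs[OF assms]] by simp
qed

section \<open>Counting by decomposition at the last node\<close>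

lemma card_eq_sum_card_fibres:
  assumes "finite S" "finite R" "g ` S \<subseteq> R"
  shows "card S = (\<Sum>y\<in>R. card {x \<in> S. g x = y})"
  using sum_fun_comp[OF assms, of "\<lambda>_. 1::nat"] by simp

definition glue :: "nat \<Rightarrow> nat \<Rightarrow> (nat \<Rightarrow> nat) \<Rightarrow> (nat \<Rightarrow> nat) \<Rightarrow> nat \<Rightarrow> nat" where
  "glue i v c d = (\<lambda>u. if u = v then i else if u < i then c u else d u)"

lemma glue_restrictions:
  assumes "f v = i" "\<And>u. v < u \<Longrightarrow> f u = u"
  shows "f = glue i v (\<lambda>u. if u < i then f u else u) (\<lambda>u. if i \<le> u \<and> u < v then f u else u)"
  using assms by (auto simp: glue_def fun_eq_iff)

lemma card_glue_image:
  assumes "i \<le> v"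
    and left: "\<And>c u. c \<in> A \<Longrightarrow> i \<le> u \<Longrightarrow> c u = u"
    and right: "\<And>d u. d \<in> B \<Longrightarrow> u < i \<or> v \<le> u \<Longrightarrow> d u = u"
  shows "card ((\<lambda>(c, d). glue i v c d) ` (A \<times> B)) = card A * card B"
proof -
  have "inj_on (\<lambda>(c, d). glue i v c d) (A \<times> B)"
  proof (rule inj_onI, clarify)
    fix c d c' d' assume cd: "c \<in> A" "d \<in> B" "c' \<in> A" "d' \<in> B"
      and eq: "glue i v c d = glue i v c' d'"
    have "c u = c' u" for u
      using fun_cong[OF eq, of u] left[OF cd(1), of u] left[OF cd(3), of u] \<open>i \<le> v\<close>
      by (cases "i \<le> u") (auto simp: glue_def)
    moreover have "d u = d' u" for u
      using fun_cong[OF eq, of u] right[OF cd(2), of u] right[OF cd(4), of u]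
      by (cases "u < i \<or> v \<le> u") (auto simp: glue_def)
    ultimately show "c = c' \<and> d = d'" by auto
  qed
  then show ?thesis by (simp add: card_image card_cartesian_product)
qed

lemma nested_glue:
  assumes c: "nested c" "\<And>u. c u \<le> u" "\<And>u. i \<le> u \<Longrightarrow> c u = u"
    and d: "nested d" "\<And>u. d u \<le> u" "\<And>u. i \<le> u \<Longrightarrow> i \<le> d u" "\<And>u. v \<le> u \<Longrightarrow> d u = u"
    and "i \<le> v"
  shows "nested (glue i v c d)"
  unfolding nested_def
proof (intro allI impI)
  fix u y assume uy: "glue i v c d y \<le> u" "u < y"
  consider "y = v" | "y \<noteq> v" "y < i" | "y \<noteq> v" "i \<le> y" by linarith
  then show "glue i v c d y \<le> glue i v c d u"
  proof cases
    case 1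
    then show ?thesis using uy d(3)[of u] by (simp add: glue_def)
  next
    case 2
    then show ?thesis using uy c(1) \<open>i \<le> v\<close> by (auto simp: glue_def nested_def)
  next
    case 3
    then have "d y < y" using uy d(4)[of y] d(2)[of y] by (auto simp: glue_def)
    then have "u \<noteq> v" using uy 3 d(4)[of y] by (auto simp: glue_def)
    then show ?thesis using uy 3 d(1) d(3)[of y] by (auto simp: glue_def nested_def)
  qed
qed

lemma matching_glue:
  assumes c: "noncrossing_matching c" "\<And>u. i \<le> u \<Longrightarrow> c u = u"
    and d: "noncrossing_matching d" "\<And>u. d u < u \<Longrightarrow> i < d u" "\<And>u. v \<le> u \<Longrightarrow> d u = u"
    and "i \<le> v"
  shows "noncrossing_matching (glue i v c d)"
proof -
  have d_ge: "i \<le> d u" if "i \<le> u" for u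
    using d(2)[of u] matching_le[OF d(1), of u] that by (cases "d u < u") auto
  have nested: "nested (glue i v c d)"
    using c(1) d(1) by (intro nested_glue[OF _ _ c(2) _ _ d_ge d(3) \<open>i \<le> v\<close>])
      (auto simp: noncrossing_matching_def)
  show ?thesis
  proof (rule noncrossing_matchingI)
    show "glue i v c d u \<le> u" for u
      using matching_le[OF c(1), of u] matching_le[OF d(1), of u] \<open>i \<le> v\<close> by (simp add: glue_def)
    show "glue i v c d y \<le> u \<Longrightarrow> u < y \<Longrightarrow> glue i v c d y \<le> glue i v c d u" for u y
      using nested by (simp add: nested_def)
  next
    fix u y assume uy: "u < y" "glue i v c d u = glue i v c d y"
    have g_le: "glue i v c d u \<le> u"
      using matching_le[OF c(1), of u] matching_le[OF d(1), of u] \<open>i \<le> v\<close> by (simp add: glue_def)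
    consider "y = v" | "y \<noteq> v" "y < i" | "y \<noteq> v" "i \<le> y" by linarith
    then show "u = glue i v c d y"
    proof cases
      case 1
      then have "u < i \<Longrightarrow> c u = i" "i < u \<Longrightarrow> d u = i" using uy by (auto simp: glue_def)
      then show ?thesis
        using 1 matching_le[OF c(1), of u] d(2)[of u] by (cases u i rule: linorder_cases) (auto simp: glue_def)
    next
      case 2
      then show ?thesis using uy matching_left_end[OF c(1), of u y] \<open>i \<le> v\<close> by (auto simp: glue_def)
    next
      case 3
      then have gy: "glue i v c d y = d y" by (simp add: glue_def)
      then have "d y < y" using uy g_le by simp
      then have "y < v" using d(3)[of y] by (cases "v \<le> y") auto
      have "\<not> u < i" using uy(2) gy g_le d_ge[OF 3(2)] matching_le[OF c(1), of u]
        by (auto simp: glue_def)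
      then show ?thesis
        using uy gy \<open>y < v\<close> matching_left_end[OF d(1), of u y] by (auto simp: glue_def)
    qed
  qed
qed

lemma glue_in_bracket_vectors:
  assumes c: "c \<in> bracket_vectors lo j" and d: "d \<in> bracket_vectors (lo + j) (m - j)" and "j \<le> m"
  shows "glue (lo + j) (lo + m) c d \<in> bracket_vectors lo (Suc m)"
proof (rule bracket_vectorsI)
  let ?g = "glue (lo + j) (lo + m) c d"
  have c_fixed: "lo + j \<le> u \<Longrightarrow> c u = u" for u using bracket_vector_fixed[OF c, of u] by simp
  have d_fixed: "lo + m \<le> u \<Longrightarrow> d u = u" for u
    using bracket_vector_fixed[OF d, of u] \<open>j \<le> m\<close> by simp
  show "?g u \<le> u" for u
    using bracket_vector_le[OF c, of u] bracket_vector_le[OF d, of u] \<open>j \<le> m\<close> by (simp add: glue_def)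
  show "u < lo \<or> lo + Suc m \<le> u \<Longrightarrow> ?g u = u" for u
    using bracket_vector_fixed[OF c, of u] d_fixed[of u] \<open>j \<le> m\<close> by (auto simp: glue_def)
  show "lo \<le> u \<Longrightarrow> lo \<le> ?g u" for u
    using bracket_vector_lower[OF c, of u] bracket_vector_lower[OF d, of u] by (auto simp: glue_def)
  have "nested ?g"
    using c d \<open>j \<le> m\<close> bracket_vector_le[OF c] bracket_vector_le[OF d] bracket_vector_lower[OF d]
    by (intro nested_glue[OF _ _ c_fixed _ _ _ d_fixed]) (auto simp: bracket_vectors_def)
  then show "?g v \<le> u \<Longrightarrow> u < v \<Longrightarrow> ?g v \<le> ?g u" for u v by (simp add: nested_def)
qed

lemma bracket_vectors_last_eq:
  assumes "j \<le> m"
  shows "{a \<in> bracket_vectors lo (Suc m). a (lo + m) = lo + j}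
    = (\<lambda>(c, d). glue (lo + j) (lo + m) c d) ` (bracket_vectors lo j \<times> bracket_vectors (lo + j) (m - j))"
    (is "?S = ?G")
proof
  show "?G \<subseteq> ?S" using glue_in_bracket_vectors[OF _ _ assms] by (auto simp: glue_def)
next
  show "?S \<subseteq> ?G"
  proof
    fix a assume "a \<in> ?S"
    then have a: "a \<in> bracket_vectors lo (Suc m)" and last: "a (lo + m) = lo + j" by simp_all
    let ?c = "\<lambda>u. if u < lo + j then a u else u"
    let ?d = "\<lambda>u. if lo + j \<le> u \<and> u < lo + m then a u else u"
    have nested: "nested a" using a by (simp add: bracket_vectors_def)
    have "?c \<in> bracket_vectors lo j"
      using bracket_vector_le[OF a] bracket_vector_fixed[OF a] bracket_vector_lower[OF a]
        nested_restrict[OF nested, of "\<lambda>u. u < lo + j"]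
      by (intro bracket_vectorsI) (auto simp: nested_def)
    moreover have "lo + j \<le> a u" if "lo + j \<le> u" "u < lo + m" for u
      using bracket_vector_nested[OF a, of "lo + m" u] last that by simp
    then have "?d \<in> bracket_vectors (lo + j) (m - j)"
      using bracket_vector_le[OF a] nested_restrict[OF nested, of "\<lambda>u. lo + j \<le> u \<and> u < lo + m"] assms
      by (intro bracket_vectorsI) (auto simp: nested_def)
    moreover have "a = glue (lo + j) (lo + m) ?c ?d"
      using bracket_vector_fixed[OF a] last by (intro glue_restrictions) auto
    ultimately show "a \<in> ?G" by force
  qed
qed

lemma card_bracket_vectors_last_eq:
  assumes "j \<le> m"
  shows "card {a \<in> bracket_vectors lo (Suc m). a (lo + m) = lo + j}
    = card (bracket_vectors lo j) * card (bracket_vectors (lo + j) (m - j))"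
  unfolding bracket_vectors_last_eq[OF assms]
proof (rule card_glue_image)
  show "lo + j \<le> lo + m" using assms by simp
  show "c u = u" if "c \<in> bracket_vectors lo j" "lo + j \<le> u" for c u
    using bracket_vector_fixed[OF that(1), of u] that(2) by simp
  show "d u = u" if "d \<in> bracket_vectors (lo + j) (m - j)" "u < lo + j \<or> lo + m \<le> u" for d u
    using bracket_vector_fixed[OF that(1), of u] that(2) assms by auto
qed

lemma card_bracket_vectors_Suc:
  "card (bracket_vectors lo (Suc m))
    = (\<Sum>j\<le>m. card (bracket_vectors lo j) * card (bracket_vectors (lo + j) (m - j)))"
proof -
  let ?fibre = "\<lambda>j. {a \<in> bracket_vectors lo (Suc m). a (lo + m) - lo = j}"
  have last: "lo \<le> a (lo + m)" "a (lo + m) \<le> lo + m" if "a \<in> bracket_vectors lo (Suc m)" for a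
    using bracket_vector_lower[OF that, of "lo + m"] bracket_vector_le[OF that, of "lo + m"] by simp_all
  then have "(\<lambda>a. a (lo + m) - lo) ` bracket_vectors lo (Suc m) \<subseteq> {..m}" by fastforce
  then have "card (bracket_vectors lo (Suc m)) = (\<Sum>j\<le>m. card (?fibre j))"
    by (intro card_eq_sum_card_fibres) (simp_all add: finite_bracket_vectors)
  moreover have "?fibre j = {a \<in> bracket_vectors lo (Suc m). a (lo + m) = lo + j}" for j
    using last by auto
  ultimately show ?thesis by (simp add: card_bracket_vectors_last_eq)
qed

lemma glue_in_long_matchings:
  assumes c: "c \<in> long_matchings k lo j" and d: "d \<in> long_matchings k (Suc (lo + j)) (m - 1 - j)"
    and "j < m" "j + k \<le> m"
  shows "glue (lo + j) (lo + m) c d \<in> long_matchings k lo (Suc m)"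
proof (rule long_matchingsI)
  let ?g = "glue (lo + j) (lo + m) c d"
  have d_fixed: "lo + m \<le> u \<Longrightarrow> d u = u" for u
    using long_matching_fixed[OF d, of u] \<open>j < m\<close> by simp
  have d_arcs: "lo + j < d u" if "d u < u" for u
    using long_matching_lower[OF d that] by simp
  show "noncrossing_matching ?g"
    using \<open>j < m\<close> long_matching_matching[OF c] long_matching_matching[OF d]
      long_matching_fixed[OF c] d_arcs d_fixed
    by (intro matching_glue) auto
  show "?g u = u" if "u < lo \<or> lo + Suc m \<le> u" for u
    using that long_matching_fixed[OF c, of u] d_fixed[of u] \<open>j < m\<close> by (auto simp: glue_def)
  have "lo \<le> ?g u \<and> k \<le> u - ?g u" if "?g u < u" for u
    using that assms(3,4) long_matching_lower[OF c, of u] long_matching_long[OF c, of u]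
      long_matching_lower[OF d, of u] long_matching_long[OF d, of u]
    by (auto simp: glue_def split: if_splits)
  then show "?g u < u \<Longrightarrow> lo \<le> ?g u" "?g u < u \<Longrightarrow> k \<le> u - ?g u" for u by simp_all
qed

lemma long_matchings_last_eq:
  assumes "j < m" "j + k \<le> m"
  shows "{b \<in> long_matchings k lo (Suc m). b (lo + m) = lo + j}
    = (\<lambda>(c, d). glue (lo + j) (lo + m) c d) ` (long_matchings k lo j \<times> long_matchings k (Suc (lo + j)) (m - 1 - j))"
    (is "?S = ?G")
proof
  show "?G \<subseteq> ?S" using glue_in_long_matchings[OF _ _ assms] by (auto simp: glue_def)
next
  show "?S \<subseteq> ?G"
  proof
    fix b assume "b \<in> ?S"
    then have b: "b \<in> long_matchings k lo (Suc m)" and last: "b (lo + m) = lo + j" by simp_all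
    note nc = long_matching_matching[OF b]
    let ?c = "\<lambda>u. if u < lo + j then b u else u"
    let ?d = "\<lambda>u. if lo + j \<le> u \<and> u < lo + m then b u else u"
    have c_in: "?c \<in> long_matchings k lo j"
      using matching_restrict[OF nc] long_matching_fixed[OF b] long_matching_lower[OF b]
        long_matching_long[OF b]
      by (intro long_matchingsI) auto
    have "Suc (lo + j) \<le> b u" if "lo + j \<le> u" "u < lo + m" "b u < u" for u
    proof -
      have "lo + j \<le> b u" using matching_nested[OF nc, of "lo + m" u] last that by simp
      moreover have "b u \<noteq> lo + j"
        using matching_left_end[OF nc, of u "lo + m"] matching_idem[OF nc, of "lo + m"] last that by auto
      ultimately show ?thesis by simp
    qed
    moreover have "?d u = u" if "u < Suc (lo + j) \<or> Suc (lo + j) + (m - 1 - j) \<le> u" for u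
      using that matching_idem[OF nc, of "lo + m"] last assms by (cases "u = lo + j") auto
    ultimately have "?d \<in> long_matchings k (Suc (lo + j)) (m - 1 - j)"
      using matching_restrict[OF nc] long_matching_long[OF b] by (intro long_matchingsI) auto
    moreover have "b = glue (lo + j) (lo + m) ?c ?d"
      using long_matching_fixed[OF b] last by (intro glue_restrictions) auto
    ultimately show "b \<in> ?G" using c_in by force
  qed
qed

lemma long_matchings_last_fixed:
  "{b \<in> long_matchings k lo (Suc m). b (lo + m) = lo + m} = long_matchings k lo m"
proof -
  have "(\<forall>v. v < lo \<or> lo + m \<le> v \<longrightarrow> b v = v)
      \<longleftrightarrow> (\<forall>v. v < lo \<or> lo + Suc m \<le> v \<longrightarrow> b v = v) \<and> b (lo + m) = lo + m" for b :: "nat \<Rightarrow> nat"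
  proof
    assume H: "(\<forall>v. v < lo \<or> lo + Suc m \<le> v \<longrightarrow> b v = v) \<and> b (lo + m) = lo + m"
    show "\<forall>v. v < lo \<or> lo + m \<le> v \<longrightarrow> b v = v"
    proof (intro allI impI)
      fix v assume "v < lo \<or> lo + m \<le> v"
      then consider "v < lo \<or> lo + Suc m \<le> v" | "v = lo + m" by linarith
      then show "b v = v" using H by cases auto
    qed
  qed auto
  then show ?thesis unfolding long_matchings_def by auto
qed

lemma card_long_matchings_last_eq:
  assumes "j < m" "j + k \<le> m"
  shows "card {b \<in> long_matchings k lo (Suc m). b (lo + m) = lo + j}
    = card (long_matchings k lo j) * card (long_matchings k (Suc (lo + j)) (m - 1 - j))"
  unfolding long_matchings_last_eq[OF assms]
proof (rule card_glue_image)
  show "lo + j \<le> lo + m" using assms by simp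
  show "c u = u" if "c \<in> long_matchings k lo j" "lo + j \<le> u" for c u
    using long_matching_fixed[OF that(1), of u] that(2) by simp
  show "d u = u" if "d \<in> long_matchings k (Suc (lo + j)) (m - 1 - j)" "u < lo + j \<or> lo + m \<le> u" for d u
    using long_matching_fixed[OF that(1), of u] that(2) assms by auto
qed

lemma card_long_matchings_Suc:
  "card (long_matchings k lo (Suc m)) = card (long_matchings k lo m) +
     (\<Sum>j | j < m \<and> j + k \<le> m. card (long_matchings k lo j) * card (long_matchings k (Suc (lo + j)) (m - 1 - j)))"
proof -
  let ?J = "{j. j < m \<and> j + k \<le> m}"
  let ?fibre = "\<lambda>j. {b \<in> long_matchings k lo (Suc m). b (lo + m) - lo = j}"
  have last_cases: "b (lo + m) = lo + m \<or> (lo \<le> b (lo + m) \<and> b (lo + m) + k \<le> lo + m)"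
    if b: "b \<in> long_matchings k lo (Suc m)" for b
    using long_matching_lower[OF b, of "lo + m"] long_matching_long[OF b, of "lo + m"]
      matching_le[OF long_matching_matching[OF b], of "lo + m"]
    by (cases "b (lo + m) < lo + m") auto
  have "lo \<le> b (lo + m)" if "b \<in> long_matchings k lo (Suc m)" for b
    using last_cases[OF that] by auto
  then have fibre_eq: "?fibre j = {b \<in> long_matchings k lo (Suc m). b (lo + m) = lo + j}" for j
    by auto
  have "(\<lambda>b. b (lo + m) - lo) ` long_matchings k lo (Suc m) \<subseteq> insert m ?J"
    using last_cases by fastforce
  then have "card (long_matchings k lo (Suc m)) = (\<Sum>j\<in>insert m ?J. card (?fibre j))"
    by (intro card_eq_sum_card_fibres) (simp_all add: finite_long_matchings)
  also have "\<dots> = card (?fibre m) + (\<Sum>j\<in>?J. card (?fibre j))" by simp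
  also have "\<dots> = card (long_matchings k lo m) +
     (\<Sum>j\<in>?J. card (long_matchings k lo j) * card (long_matchings k (Suc (lo + j)) (m - 1 - j)))"
    unfolding fibre_eq long_matchings_last_fixed
    by (intro arg_cong2[where f = "(+)"] sum.cong refl card_long_matchings_last_eq) simp_all
  finally show ?thesis .
qed

fun catalan :: "nat \<Rightarrow> nat" where
  "catalan 0 = 1"
| "catalan (Suc m) = (\<Sum>j\<le>m. catalan j * catalan (m - j))"

fun long_matching_count :: "nat \<Rightarrow> nat \<Rightarrow> nat" where
  "long_matching_count k 0 = 1"
| "long_matching_count k (Suc m) = long_matching_count k m +
     (\<Sum>j | j < m \<and> j + k \<le> m. long_matching_count k j * long_matching_count k (m - 1 - j))"

lemma bracket_vectors_0: "bracket_vectors lo 0 = {\<lambda>u. u}"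
proof -
  have "a = (\<lambda>u. u)" if "a \<in> bracket_vectors lo 0" for a
    by (intro ext) (metis add_0_right linorder_not_le bracket_vector_fixed[OF that])
  moreover have "(\<lambda>u. u) \<in> bracket_vectors lo 0" by (rule bracket_vectorsI) simp_all
  ultimately show ?thesis by blast
qed

lemma long_matchings_0: "long_matchings k lo 0 = {\<lambda>u. u}"
proof -
  have "b = (\<lambda>u. u)" if "b \<in> long_matchings k lo 0" for b
    by (intro ext) (metis add_0_right linorder_not_le long_matching_fixed[OF that])
  moreover have "(\<lambda>u. u) \<in> long_matchings k lo 0"
    by (intro long_matchingsI noncrossing_matchingI) simp_all
  ultimately show ?thesis by blast
qed

lemma card_bracket_vectors: "card (bracket_vectors lo m) = catalan m"
proof (induction m arbitrary: lo rule: less_induct)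
  case (less m)
  show ?case
  proof (cases m)
    case (Suc m')
    have IH: "card (bracket_vectors lo' j) = catalan j" if "j \<le> m'" for lo' j
      using less.IH[of j lo'] Suc that by simp
    show ?thesis
      unfolding Suc card_bracket_vectors_Suc catalan.simps by (intro sum.cong) (simp_all add: IH)
  qed (simp add: bracket_vectors_0)
qed

lemma card_long_matchings: "card (long_matchings k lo m) = long_matching_count k m"
proof (induction m arbitrary: lo rule: less_induct)
  case (less m)
  show ?case
  proof (cases m)
    case (Suc m')
    have IH: "card (long_matchings k lo' j) = long_matching_count k j" if "j \<le> m'" for lo' j
      using less.IH[of j lo'] Suc that by simp
    show ?thesis
      unfolding Suc card_long_matchings_Suc long_matching_count.simps
      by (intro arg_cong2[where f = "(+)"] sum.cong) (simp_all add: IH)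
  qed (simp add: long_matchings_0)
qed

lemma pop_image_card_0: "pop_image_card 0 n = catalan n"
  by (simp add: pop_image_card_eq_card_bracket_image card_bracket_vectors)

lemma pop_image_card_pos:
  assumes "1 \<le> k"
  shows "pop_image_card k n = long_matching_count k (n - 1)"
  by (simp add: pop_image_card_eq_card_bracket_image card_funpow_pop_bracket_image[OF assms]
      card_long_matchings)

lemma pop_image_card_le_catalan: "pop_image_card k n \<le> catalan n"
  using card_image_le[OF finite_bracket_vectors, of "pop_bracket ^^ k" 1 n]
  by (simp add: pop_image_card_eq_card_bracket_image card_bracket_vectors)

lemma long_matching_count_short: "m \<le> k \<Longrightarrow> long_matching_count k m = 1"
  by (induction m) auto

section \<open>The generating function\<close>

lemma sum_convolution_le_square:
  fixes a :: "nat \<Rightarrow> real"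
  assumes "\<And>n. 0 \<le> a n"
  shows "(\<Sum>n<N. \<Sum>j\<le>n. a j * a (n - j)) \<le> (\<Sum>n<N. a n)\<^sup>2"
proof -
  have "(\<Sum>n<N. \<Sum>j\<le>n. a j * a (n - j)) = (\<Sum>(i, j)\<in>{(i, j). i + j < N}. a i * a j)"
    by (rule sum.triangle_reindex[symmetric])
  also have "\<dots> \<le> (\<Sum>(i, j)\<in>{..<N} \<times> {..<N}. a i * a j)"
    by (rule sum_mono2) (auto intro: mult_nonneg_nonneg assms)
  also have "\<dots> = (\<Sum>n<N. a n)\<^sup>2"
    by (simp add: sum.cartesian_product[symmetric] power2_eq_square sum_product)
  finally show ?thesis .
qed

lemma partial_sums_le_2_of_convolution_bound:
  fixes c :: "nat \<Rightarrow> real"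
  assumes nonneg: "\<And>n. 0 \<le> c n" and "c 0 \<le> 1"
    and rec: "\<And>n. c (Suc n) \<le> (\<Sum>j\<le>n. c j * c (n - j)) / 4"
  shows "(\<Sum>n<N. c n) \<le> 2"
proof (induction N)
  case (Suc N)
  have "(\<Sum>n<Suc N. c n) = c 0 + (\<Sum>n<N. c (Suc n))" by (rule sum.lessThan_Suc_shift)
  also have "\<dots> \<le> 1 + (\<Sum>n<N. \<Sum>j\<le>n. c j * c (n - j)) / 4"
    using \<open>c 0 \<le> 1\<close> sum_mono[of "{..<N}" "\<lambda>n. c (Suc n)", OF rec] by (simp add: sum_divide_distrib)
  also have "\<dots> \<le> 1 + (\<Sum>n<N. c n)\<^sup>2 / 4"
    using sum_convolution_le_square[OF nonneg] by simp
  also have "\<dots> \<le> 1 + 2\<^sup>2 / 4"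
    using Suc.IH sum_nonneg[of "{..<N}" c] nonneg by (intro add_left_mono divide_right_mono power_mono) auto
  finally show ?case by simp
qed simp

lemma catalan_partial_sums_le: "(\<Sum>n<N. real (catalan n) / 4 ^ n) \<le> 2"
proof (rule partial_sums_le_2_of_convolution_bound)
  fix n
  have "real (catalan (Suc n)) / 4 ^ Suc n = (\<Sum>j\<le>n. real (catalan j) * real (catalan (n - j)) / 4 ^ n) / 4"
    by (simp add: of_nat_sum sum_divide_distrib mult.commute)
  also have "\<dots> = (\<Sum>j\<le>n. real (catalan j) / 4 ^ j * (real (catalan (n - j)) / 4 ^ (n - j))) / 4"
    by (intro arg_cong2[where f = "(/)"] sum.cong refl) (simp add: power_add[symmetric])
  finally show "real (catalan (Suc n)) / 4 ^ Suc n
      \<le> (\<Sum>j\<le>n. real (catalan j) / 4 ^ j * (real (catalan (n - j)) / 4 ^ (n - j))) / 4" by simp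
qed simp_all

lemma summable_catalan_quarter: "summable (\<lambda>n. real (catalan n) / 4 ^ n)"
  by (rule summableI_nonneg_bounded[of _ 2]) (simp_all add: catalan_partial_sums_le)

definition pop_gf :: "nat \<Rightarrow> real fps" where
  "pop_gf k = Abs_fps (\<lambda>n. real (pop_image_card k n))"

lemma norm_pop_gf_term_le:
  assumes "norm x \<le> 1/4"
  shows "norm (fps_nth (pop_gf k) n * x ^ n) \<le> real (catalan n) / 4 ^ n"
proof -
  have "norm (fps_nth (pop_gf k) n * x ^ n) = real (pop_image_card k n) * \<bar>x\<bar> ^ n"
    by (simp add: pop_gf_def abs_mult power_abs)
  also have "\<dots> \<le> real (catalan n) * (1/4) ^ n"
    using pop_image_card_le_catalan[of k n] assms by (intro mult_mono power_mono) auto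
  finally show ?thesis by (simp add: power_one_over)
qed

lemma pop_gf_conv_radius: "ereal (1/4) \<le> fps_conv_radius (pop_gf k)"
proof -
  have "summable (\<lambda>n. fps_nth (pop_gf k) n * (1/4::real) ^ n)"
    by (rule summable_comparison_test'[OF summable_catalan_quarter, of 0])
      (use norm_pop_gf_term_le in auto)
  then show ?thesis unfolding fps_conv_radius_def by (metis conv_radius_geI norm_divide norm_one norm_numeral)
qed

lemma norm_less_pop_gf_conv_radius:
  assumes "norm x < 1/4"
  shows "ereal (norm x) < fps_conv_radius (pop_gf k)"
proof -
  have "ereal (norm x) < ereal (1/4)" using assms by simp
  then show ?thesis using pop_gf_conv_radius by (rule order.strict_trans2)
qed

lemma abs_eval_pop_gf_le:
  assumes "norm x \<le> 1/4"
  shows "\<bar>eval_fps (pop_gf k) x\<bar> \<le> 2"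
proof -
  have summable: "summable (\<lambda>n. norm (fps_nth (pop_gf k) n * x ^ n))"
    by (rule summable_comparison_test'[OF summable_catalan_quarter, of 0])
      (use norm_pop_gf_term_le[OF assms] in auto)
  have "\<bar>eval_fps (pop_gf k) x\<bar> \<le> (\<Sum>n. norm (fps_nth (pop_gf k) n * x ^ n))"
    unfolding eval_fps_def using summable_norm[OF summable] by simp
  also have "\<dots> \<le> (\<Sum>n. real (catalan n) / 4 ^ n)"
    by (rule suminf_le[OF norm_pop_gf_term_le[OF assms] summable summable_catalan_quarter])
  also have "\<dots> \<le> 2"
    by (rule suminf_le_const[OF summable_catalan_quarter catalan_partial_sums_le])
  finally show ?thesis .
qed

lemma catalan_fps_eq:
  fixes C :: "real fps"
  defines "C \<equiv> Abs_fps (\<lambda>n. real (catalan n))"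
  shows "C = 1 + fps_X * C\<^sup>2"
proof (rule fps_ext)
  fix n
  show "fps_nth C n = fps_nth (1 + fps_X * C\<^sup>2) n"
  proof (cases n)
    case (Suc m)
    have "fps_nth (C * C) m = real (catalan (Suc m))"
      by (simp add: C_def fps_mult_nth atLeast0AtMost of_nat_sum)
    then show ?thesis using Suc by (simp add: fps_X_mult_nth power2_eq_square C_def)
  qed (simp add: C_def)
qed

text \<open>H keeps the coefficients of G from index k - 1 on; this is how the constraint
  j + k \<le> m of the recurrence enters the product G * H.\<close>

lemma long_matching_count_fps_eq:
  fixes k :: nat and G H :: "real fps"
  defines "G \<equiv> Abs_fps (\<lambda>n. real (long_matching_count k n))"
    and "H \<equiv> Abs_fps (\<lambda>n. if k - 1 \<le> n then real (long_matching_count k n) else 0)"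
  assumes "1 \<le> k"
  shows "G = 1 + fps_X * G + fps_X\<^sup>2 * (G * H)"
proof (rule fps_ext)
  fix n
  show "fps_nth G n = fps_nth (1 + fps_X * G + fps_X\<^sup>2 * (G * H)) n"
  proof (cases n)
    case (Suc m)
    show ?thesis
    proof (cases m)
      case (Suc m')
      have "{i \<in> {0..m'}. k - 1 \<le> m' - i} = {j. j < Suc m' \<and> j + k \<le> Suc m'}"
        using assms(3) by auto
      then have "fps_nth (G * H) m'
          = (\<Sum>j | j < Suc m' \<and> j + k \<le> Suc m'. real (long_matching_count k j * long_matching_count k (m' - j)))"
        by (simp add: G_def H_def fps_mult_nth sum.inter_filter[symmetric] if_distrib cong: if_cong)
      then show ?thesis
        using \<open>n = Suc m\<close> Suc by (simp add: G_def fps_X_power_mult_nth of_nat_sum)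
    qed (simp add: G_def fps_X_power_mult_nth \<open>n = Suc m\<close>)
  qed (simp add: G_def fps_X_power_mult_nth)
qed

lemma quadratic_of_catalan_eq:
  fixes X C :: "'a::idom"
  assumes "C = 1 + X * C\<^sup>2"
  shows "X * (1 - X) * C\<^sup>2 - (1 - X) * C + (1 - X) = 0"
  using assms by algebra

lemma quadratic_of_long_matching_eq:
  fixes X Y F G H P :: "'a::idom"
  assumes "G = 1 + X * G + X\<^sup>2 * (G * H)" "G = H + P" "(1 - X) * P = 1 - Y" "F = 1 + X * G"
  shows "X * (1 - X) * F\<^sup>2 - (1 - X\<^sup>2 * Y) * F + (1 - X\<^sup>2 * Y) = 0"
  using assms by algebra

lemma pop_gf_quadratic:
  "fps_X * (1 - fps_X) * (pop_gf k)\<^sup>2 - (1 - fps_X ^ (k + 1)) * pop_gf k + (1 - fps_X ^ (k + 1)) = 0"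
proof (cases "k = 0")
  case True
  have "pop_gf 0 = Abs_fps (\<lambda>n. real (catalan n))" by (simp add: pop_gf_def pop_image_card_0)
  then show ?thesis
    using True quadratic_of_catalan_eq[OF catalan_fps_eq] by simp
next
  case False
  then have k: "1 \<le> k" by simp
  define G :: "real fps" where "G = Abs_fps (\<lambda>n. real (long_matching_count k n))"
  define H :: "real fps" where "H = Abs_fps (\<lambda>n. if k - 1 \<le> n then real (long_matching_count k n) else 0)"
  define P :: "real fps" where "P = (\<Sum>q<k - 1. fps_X ^ q)"
  have "G = 1 + fps_X * G + fps_X\<^sup>2 * (G * H)"
    unfolding G_def H_def using k by (rule long_matching_count_fps_eq)
  moreover have "G = H + P"
  proof (rule fps_ext)
    fix n
    show "fps_nth G n = fps_nth (H + P) n"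
      using long_matching_count_short[of n k]
      by (simp add: G_def H_def P_def fps_sum_nth fps_X_power_nth)
  qed
  moreover have "(1 - fps_X) * P = 1 - fps_X ^ (k - 1)"
    unfolding P_def by (rule one_diff_power_eq[symmetric])
  moreover have "pop_gf k = 1 + fps_X * G"
  proof (rule fps_ext)
    fix n show "fps_nth (pop_gf k) n = fps_nth (1 + fps_X * G) n"
      using pop_image_card_pos[OF k, of n] by (cases n) (simp_all add: pop_gf_def G_def)
  qed
  moreover have "fps_X ^ (k + 1) = fps_X\<^sup>2 * fps_X ^ (k - 1)"
    using k by (simp add: power_add[symmetric])
  ultimately show ?thesis using quadratic_of_long_matching_eq by metis
qed

lemma eval_fps_quadratic:
  fixes f :: "'a::{banach, real_normed_field} fps" and p q r :: "'a poly"
  assumes eq: "fps_of_poly p * f\<^sup>2 + fps_of_poly q * f + fps_of_poly r = 0"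
    and z: "ereal (norm z) < fps_conv_radius f"
  shows "poly p z * (eval_fps f z)\<^sup>2 + poly q z * eval_fps f z + poly r z = 0"
proof -
  have radius: "ereal (norm z) < fps_conv_radius (fps_of_poly s * g)"
    if "ereal (norm z) < fps_conv_radius g" for s g
    using that fps_conv_radius_mult[of "fps_of_poly s" g] by simp
  have z2: "ereal (norm z) < fps_conv_radius (f\<^sup>2)"
    using z fps_conv_radius_power[of f 2] by (rule order.strict_trans2)
  have z_p: "ereal (norm z) < fps_conv_radius (fps_of_poly p * f\<^sup>2)" by (rule radius[OF z2])
  have z_q: "ereal (norm z) < fps_conv_radius (fps_of_poly q * f)" by (rule radius[OF z])
  have z_pq: "ereal (norm z) < fps_conv_radius (fps_of_poly p * f\<^sup>2 + fps_of_poly q * f)"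
  proof -
    have "ereal (norm z) < min (fps_conv_radius (fps_of_poly p * f\<^sup>2)) (fps_conv_radius (fps_of_poly q * f))"
      using z_p z_q by simp
    then show ?thesis using fps_conv_radius_add by (rule order.strict_trans2)
  qed
  have "0 = eval_fps (fps_of_poly p * f\<^sup>2 + fps_of_poly q * f + fps_of_poly r) z"
    unfolding eq by simp
  also have "\<dots> = eval_fps (fps_of_poly p * f\<^sup>2) z + eval_fps (fps_of_poly q * f) z + poly r z"
    by (simp add: eval_fps_add[OF z_pq] eval_fps_add[OF z_p z_q])
  also have "\<dots> = poly p z * (eval_fps f z)\<^sup>2 + poly q z * eval_fps f z + poly r z"
    by (simp add: eval_fps_mult[OF _ z2] eval_fps_mult[OF _ z] eval_fps_power[OF z])
  finally show ?thesis by simp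
qed

lemma quadratic_eq_lower_root:
  fixes a b c s :: real
  assumes "a * s\<^sup>2 + b * s + c = 0" "a \<noteq> 0" "2 * a * s + b \<le> 0"
  shows "s = (- b - sqrt (b\<^sup>2 - 4 * a * c)) / (2 * a)"
proof -
  have "(2 * a * s + b)\<^sup>2 = 4 * a * (a * s\<^sup>2 + b * s + c) + (b\<^sup>2 - 4 * a * c)"
    by (simp add: power2_eq_square algebra_simps)
  then have "b\<^sup>2 - 4 * a * c = (2 * a * s + b)\<^sup>2" using assms(1) by simp
  then have "sqrt (b\<^sup>2 - 4 * a * c) = - (2 * a * s + b)"
    unfolding real_sqrt_abs using assms(3) by simp
  then have "- b - sqrt (b\<^sup>2 - 4 * a * c) = 2 * a * s" by simp
  then show ?thesis using assms(2) by simp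
qed

lemma eval_pop_gf_quadratic:
  assumes "norm x < 1/4"
  shows "x * (1 - x) * (eval_fps (pop_gf k) x)\<^sup>2 + - (1 - x ^ (k + 1)) * eval_fps (pop_gf k) x
    + (1 - x ^ (k + 1)) = 0"
proof -
  note radius = norm_less_pop_gf_conv_radius[OF assms]
  have p: "fps_of_poly [:0, 1, -1:] = fps_X * (1 - fps_X :: real fps)"
    by (simp add: fps_of_poly_pCons fps_of_poly_const algebra_simps)
  have r: "fps_of_poly (1 - monom 1 (k + 1)) = 1 - (fps_X ^ (k + 1) :: real fps)"
    by (simp add: fps_of_poly_diff fps_of_poly_monom')
  have "fps_of_poly [:0, 1, -1:] * (pop_gf k)\<^sup>2 + fps_of_poly (- (1 - monom 1 (k + 1))) * pop_gf k
      + fps_of_poly (1 - monom 1 (k + 1)) = 0"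
    unfolding p fps_of_poly_uminus r using pop_gf_quadratic[of k] by (simp add: algebra_simps)
  from eval_fps_quadratic[OF this radius] show ?thesis by (simp add: poly_monom algebra_simps)
qed

lemma lower_root_condition:
  fixes x s :: real
  assumes x: "\<bar>x\<bar> < 1/16" and s: "\<bar>s\<bar> \<le> 2"
  shows "2 * (x * (1 - x)) * s - (1 - x ^ (k + 1)) \<le> 0"
proof -
  have "\<bar>x\<bar> ^ (k + 1) \<le> \<bar>x\<bar> ^ 1"
    using x by (intro power_decreasing) auto
  then have "\<bar>x ^ (k + 1)\<bar> \<le> \<bar>x\<bar>" unfolding power_abs by simp
  then have B: "15/16 \<le> 1 - x ^ (k + 1)" using x by linarith
  have "\<bar>1 - x\<bar> \<le> 17/16" using x by linarith
  then have "\<bar>x\<bar> * \<bar>1 - x\<bar> * \<bar>s\<bar> \<le> 1/16 * (17/16) * 2"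
    using x s by (intro mult_mono) auto
  then have "\<bar>2 * (x * (1 - x)) * s\<bar> \<le> 17/64" by (simp add: abs_mult)
  then show ?thesis using B by linarith
qed

lemma eval_pop_gf_eq:
  assumes x: "0 < \<bar>x\<bar>" "\<bar>x\<bar> < 1/16"
  shows "eval_fps (pop_gf k) x
    = (1 - x ^ (k + 1) - sqrt ((1 - x ^ (k + 1))\<^sup>2 - 4 * x * (1 - x) * (1 - x ^ (k + 1)))) / (2 * x * (1 - x))"
proof -
  define s where "s = eval_fps (pop_gf k) x"
  define B where "B = 1 - x ^ (k + 1)"
  have "s = (- (- B) - sqrt ((- B)\<^sup>2 - 4 * (x * (1 - x)) * B)) / (2 * (x * (1 - x)))"
  proof (rule quadratic_eq_lower_root)
    show "x * (1 - x) * s\<^sup>2 + - B * s + B = 0"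
      using eval_pop_gf_quadratic[of x k] x unfolding s_def B_def by simp
    show "x * (1 - x) \<noteq> 0" using x by auto
    show "2 * (x * (1 - x)) * s + - B \<le> 0"
      using lower_root_condition[of x s k] abs_eval_pop_gf_le[of x k] x unfolding s_def B_def by simp
  qed
  then have "s = (B - sqrt (B\<^sup>2 - 4 * x * (1 - x) * B)) / (2 * x * (1 - x))"
    by (simp add: mult.assoc)
  then show ?thesis unfolding s_def B_def .
qed

theorem theorem1p3:
  fixes k :: nat
  shows "\<exists>r>0. \<forall>x::real. 0 < \<bar>x\<bar> \<and> \<bar>x\<bar> < r \<longrightarrow>
    (\<lambda>n. real (pop_image_card k n) * x ^ n) sums
      ((1 - x ^ (k + 1) - sqrt ((1 - x ^ (k + 1))\<^sup>2 - 4 * x * (1 - x) * (1 - x ^ (k + 1))))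
        / (2 * x * (1 - x)))"
proof (intro exI[of _ "1/16"] conjI allI impI)
  fix x :: real assume x: "0 < \<bar>x\<bar> \<and> \<bar>x\<bar> < 1/16"
  then have "ereal (norm x) < fps_conv_radius (pop_gf k)"
    by (intro norm_less_pop_gf_conv_radius) simp
  from sums_eval_fps[OF this] show "(\<lambda>n. real (pop_image_card k n) * x ^ n) sums
      ((1 - x ^ (k + 1) - sqrt ((1 - x ^ (k + 1))\<^sup>2 - 4 * x * (1 - x) * (1 - x ^ (k + 1))))
        / (2 * x * (1 - x)))"
    using eval_pop_gf_eq[of x k] x by (simp add: pop_gf_def)
qed simp

end
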